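(* Let $(\mathcal{X},\mathfrak{X})$ be a separable measurable space, $\mathcal{Y}$ a separable real Hilbert space, $X,Y$ random variables in $\mathcal{X},\mathcal{Y}$ with $\mathbb{E}\lVert Y\rVert_\mathcal{Y}^2<\infty$, and $f^*$ measurable with $\mathbb{E}[Y\mid X]=f^*(X)$. Let $\mathcal{H}$ be a separable vector-valued RKHS of functions $\mathcal{X}\to\mathcal{Y}$ with kernel $K$ satisfying $\sup_x\lVert K(x,x)\rVert_{\mathrm{op}}<B$ for some $B>0$, and let $\iota:\mathcal{H}\to L^2(\mathcal{X},P_X;\mathcal{Y})$ be the inclusion. Suppose $\iota\mathcal{H}$ is dense in $L^2(\mathcal{X},P_X;\mathcal{Y})$. Let $(X_i,Y_i)_{i\ge1}$ be i.i.d. copies of $(X,Y)$, and let $\lambda_n>0$ converge to $0$ at a slower rate than $n^{-1/2}$ (i.e. $\sqrt{n}\,\lambda_n\to\infty$). Let $\hat f_{n,\lambda_n}$ be the minimiser over $\mathcal{H}$ of $\frac1n\sum_{i=1}^n\lVert f(X_i)-Y_i\rVert_\mathcal{Y}^2+\lambda_n\lVert f\rVert_\mathcal{H}^2$. Then $$R(\hat f_{n,\lambda_n})-R(f^* )=\mathbb{E}\big[\lVert\hat f_{n,\lambda_n}(X)-f^*(X)\rVert_\mathcal{Y}^2\big]=\lVert\iota\hat f_{n,\lambda_n}-f^*\rVert_2^2\xrightarrow{P}0,$$ where $R(f)=\mathbb{E}\lVert f(X)-Y\rVert_\mathcal{Y}^2$ (with the expectation taken over an independent copy $(X,Y)$,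 conditionally on the sample).
   Context: A vector-valued RKHS is a Hilbert space of functions $\mathcal{X}\to\mathcal{Y}$ with continuous evaluation maps $S_xf=f(x)$; its kernel is $K(x,x')y=S_xS_{x'}^*y$. $L^2(\mathcal{X},P_X;\mathcal{Y})$ is the Bochner space with norm $\lVert f\rVert_2=(\mathbb{E}\lVert f(X)\rVert_\mathcal{Y}^2)^{1/2}$, $P_X$ the law of $X$. $\xrightarrow{P}$ denotes convergence in probability. *)

theory Defs
  imports "HOL-Probability.Probability"
begin

definition separable_measurable_space :: "'x measure \<Rightarrow> bool" where
  "separable_measurable_space MX \<longleftrightarrow>
     (\<exists>C. countable C \<and> C \<subseteq> Pow (space MX) \<and> sets MX = sigma_sets (space MX) C)"

text \<open>A vector-valued RKHS: a Hilbert space (type 'h) injectively and linearly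
  identified with functions 'x to 'y via emb, with bounded (continuous) evaluation maps
  S_x h = emb h x.\<close>
definition vv_rkhs :: "('h::{real_inner,complete_space} \<Rightarrow> 'x \<Rightarrow> 'y::real_inner) \<Rightarrow> bool" where
  "vv_rkhs emb \<longleftrightarrow> inj emb \<and> (\<forall>x. bounded_linear (\<lambda>h. emb h x))"

definition eval_adj :: "('h::real_inner \<Rightarrow> 'x \<Rightarrow> 'y::real_inner) \<Rightarrow> 'x \<Rightarrow> 'y \<Rightarrow> 'h" where
  "eval_adj emb x y = (THE h. \<forall>g. inner h g = inner y (emb g x))"

definition rk_kernel :: "('h::real_inner \<Rightarrow> 'x \<Rightarrow> 'y::real_inner) \<Rightarrow> 'x \<Rightarrow> 'x \<Rightarrow> 'y \<Rightarrow> 'y" where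
  "rk_kernel emb x x' y = emb (eval_adj emb x' y) x"

text \<open>Vector-valued conditional expectation E[Y | X] = g(X), via its defining property
  (g(X) is automatically sigma(X)-measurable once g is measurable).\<close>
definition is_cond_exp_given :: "'a measure \<Rightarrow> 'x measure \<Rightarrow> ('a \<Rightarrow> 'x) \<Rightarrow> ('a \<Rightarrow> 'y::{real_normed_vector,second_countable_topology}) \<Rightarrow> ('x \<Rightarrow> 'y) \<Rightarrow> bool" where
  "is_cond_exp_given M MX X Y g \<longleftrightarrow>
     g \<in> borel_measurable MX \<and> integrable M (\<lambda>\<omega>. g (X \<omega>)) \<and>
     (\<forall>A\<in>sets MX. (\<integral>\<omega>. indicator A (X \<omega>) *\<^sub>R Y \<omega> \<partial>M) = (\<integral>\<omega>. indicator A (X \<omega>) *\<^sub>R g (X \<omega>) \<partial>M))"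

definition L2_sq_norm :: "'x measure \<Rightarrow> ('x \<Rightarrow> 'y::real_normed_vector) \<Rightarrow> real" where
  "L2_sq_norm PX f = (\<integral>x. (norm (f x))\<^sup>2 \<partial>PX)"

definition in_L2 :: "'x measure \<Rightarrow> ('x \<Rightarrow> 'y::{real_normed_vector,second_countable_topology}) \<Rightarrow> bool" where
  "in_L2 PX f \<longleftrightarrow> f \<in> borel_measurable PX \<and> integrable PX (\<lambda>x. (norm (f x))\<^sup>2)"

definition risk :: "'a measure \<Rightarrow> ('a \<Rightarrow> 'x) \<Rightarrow> ('a \<Rightarrow> 'y::real_normed_vector) \<Rightarrow> ('x \<Rightarrow> 'y) \<Rightarrow> real" where
  "risk M X Y f = (\<integral>\<omega>. (norm (f (X \<omega>) - Y \<omega>))\<^sup>2 \<partial>M)"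

definition reg_emp_risk :: "('h::real_normed_vector \<Rightarrow> 'x \<Rightarrow> 'y::real_normed_vector) \<Rightarrow> (nat \<Rightarrow> 'x) \<Rightarrow> (nat \<Rightarrow> 'y) \<Rightarrow> nat \<Rightarrow> real \<Rightarrow> 'h \<Rightarrow> real" where
  "reg_emp_risk emb xs ys n lam f =
     (1 / real n) * (\<Sum>i<n. (norm (emb f (xs i) - ys i))\<^sup>2) + lam * (norm f)\<^sup>2"

end

theory Submission
  imports Defs
begin

text \<open>
  Let f_\<lambda> minimise the population regularised risk E |h(X) - Y|^2 + \<lambda> |h|^2 over H; it exists
  by the symmetric Lax-Milgram theorem. As Y - f*(X) is orthogonal to every square-integrable
  function of X, the excess risk of h is E |h(X) - f*(X)|^2, so the approximation error of
  f_\<lambda> is at most E |h(X) - f*(X)|^2 + \<lambda> |h|^2 for every h, which is small by density.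
  Subtracting the normal equations of the empirical and of the population problem gives
  \<lambda> |f_n - f_\<lambda>| \<le> |v_n|, where v_n is the mean of n i.i.d. centred H-valued variables, so
  E |v_n|^2 = O(1/n). Chebyshev's inequality and n \<lambda>_n^2 \<rightarrow> \<infinity> give the convergence in
  probability; the estimator is measurable because it is the strongly convex minimiser over the
  separable space H.
\<close>

section \<open>Quadratic functionals on Hilbert spaces\<close>

lemma nonneg_quadratic_imp_linear_coeff_0:
  fixes A C :: real
  assumes nonneg: "\<And>t. 0 \<le> t * A + t\<^sup>2 * C"
  shows "A = 0"
proof -
  define s where "s = \<bar>C\<bar> + 1"
  have s: "s > 0" "C \<le> s - 1" unfolding s_def by auto
  have "0 \<le> s\<^sup>2 * ((- A / s) * A + (- A / s)\<^sup>2 * C)"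
    using nonneg[of "- A / s"] by simp
  also have "\<dots> = - A\<^sup>2 * s + A\<^sup>2 * C"
    using s by (simp add: field_simps power2_eq_square)
  also have "\<dots> \<le> - A\<^sup>2"
    using s mult_left_mono[OF s(2), of "A\<^sup>2"] by (simp add: algebra_simps)
  finally show "A = 0" by simp
qed

lemma nonneg_le_of_square_le_mult:
  fixes x C :: real
  assumes "x\<^sup>2 \<le> x * C" "0 \<le> x" "0 \<le> C"
  shows "x \<le> C"
  using assms by (cases "x = 0") (auto simp: power2_eq_square mult_le_cancel_left)

lemma midpoint_convex_has_minimizer:
  fixes E :: "'a::{real_normed_vector, complete_space} \<Rightarrow> real"
  assumes bdd: "bdd_below (range E)" and cont: "continuous_on UNIV E" and c: "c > 0"
    and midpoint: "\<And>u v. c * (norm (u - v))\<^sup>2 \<le> E u + E v - 2 * E ((1/2) *\<^sub>R (u + v))"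
  shows "\<exists>u. \<forall>v. E u \<le> E v"
proof -
  define m where "m = Inf (range E)"
  define \<delta> where "\<delta> k = c / 2 * (inverse (real (Suc k)))\<^sup>2" for k
  have m_le: "m \<le> E v" for v
    unfolding m_def using bdd by (simp add: cINF_lower)
  have "\<exists>u. E u < m + \<delta> k" for k
    using cInf_lessD[of "range E" "m + \<delta> k"] c unfolding m_def \<delta>_def by auto
  then obtain us where us: "\<And>k. E (us k) < m + \<delta> k" by metis
  have \<delta>_le: "\<delta> k \<le> c / 2 * (inverse (real (Suc N)))\<^sup>2" if "N \<le> k" for N k
    unfolding \<delta>_def using c that by (intro mult_left_mono power_mono le_imp_inverse_le) auto
  have close: "dist (us k) (us l) < inverse (real (Suc N))" if "N \<le> k" "N \<le> l" for N k l
  proof -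
    have "c * (norm (us k - us l))\<^sup>2 \<le> E (us k) + E (us l) - 2 * m"
      using midpoint[of "us k" "us l"] m_le[of "(1/2) *\<^sub>R (us k + us l)"] by linarith
    also have "\<dots> < \<delta> k + \<delta> l" using us[of k] us[of l] by linarith
    also have "\<dots> \<le> c * (inverse (real (Suc N)))\<^sup>2"
      using \<delta>_le[OF that(1)] \<delta>_le[OF that(2)] by linarith
    finally have "(norm (us k - us l))\<^sup>2 < (inverse (real (Suc N)))\<^sup>2" using c by simp
    then show ?thesis by (simp add: dist_norm power_less_imp_less_base)
  qed
  have "Cauchy us"
  proof (rule metric_CauchyI)
    fix e :: real assume "e > 0"
    then obtain N where "inverse (real (Suc N)) < e" using reals_Archimedean by blast
    then show "\<exists>N. \<forall>k\<ge>N. \<forall>l\<ge>N. dist (us k) (us l) < e"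
      using close by (meson less_trans)
  qed
  then obtain u where u: "us \<longlonglongrightarrow> u" by (auto simp: Cauchy_convergent_iff convergent_def)
  have "E u \<le> E v" for v
  proof (rule LIMSEQ_le)
    show "(\<lambda>k. E (us k)) \<longlonglongrightarrow> E u"
      by (rule continuous_on_tendsto_compose[OF cont u]) auto
    have "(\<lambda>k. E v + \<delta> k) \<longlonglongrightarrow> E v + c / 2 * 0\<^sup>2"
      unfolding \<delta>_def by (intro tendsto_intros LIMSEQ_inverse_real_of_nat)
    then show "(\<lambda>k. E v + \<delta> k) \<longlonglongrightarrow> E v" by simp
    show "\<exists>N. \<forall>k\<ge>N. E (us k) \<le> E v + \<delta> k"
      using us m_le by (metis add_right_mono less_imp_le order_trans)
  qed
  then show ?thesis by blast
qed

context
  fixes a :: "'a::real_vector \<Rightarrow> 'a \<Rightarrow> real" and \<phi> :: "'a \<Rightarrow> real"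
  assumes a: "bilinear a" and a_sym: "\<And>u v. a u v = a v u" and \<phi>: "linear \<phi>"
begin

lemma quadratic_functional_shift:
  "a (u + d) (u + d) - 2 * \<phi> (u + d) = a u u - 2 * \<phi> u + 2 * (a u d - \<phi> d) + a d d"
  using a_sym[of d u]
  by (simp add: bilinear_ladd[OF a] bilinear_radd[OF a] linear_add[OF \<phi>] algebra_simps)

lemma quadratic_functional_at_critical_point:
  assumes "\<And>d. a u d = \<phi> d"
  shows "a v v - 2 * \<phi> v = a u u - 2 * \<phi> u + a (v - u) (v - u)"
  using quadratic_functional_shift[of u "v - u"] assms[of "v - u"] by simp

lemma quadratic_functional_minimizer_iff:
  assumes nonneg: "\<And>v. 0 \<le> a v v"
  shows "(\<forall>v. a u u - 2 * \<phi> u \<le> a v v - 2 * \<phi> v) \<longleftrightarrow> (\<forall>d. a u d = \<phi> d)"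
proof
  assume min: "\<forall>v. a u u - 2 * \<phi> u \<le> a v v - 2 * \<phi> v"
  show "\<forall>d. a u d = \<phi> d"
  proof
    fix d
    have "0 \<le> t * (2 * (a u d - \<phi> d)) + t\<^sup>2 * a d d" for t
      using min[rule_format, of "u + t *\<^sub>R d"] quadratic_functional_shift[of u "t *\<^sub>R d"]
      by (simp add: bilinear_lmul[OF a] bilinear_rmul[OF a] linear_scale[OF \<phi>] power2_eq_square
          algebra_simps)
    then show "a u d = \<phi> d" using nonneg_quadratic_imp_linear_coeff_0 by fastforce
  qed
next
  assume "\<forall>d. a u d = \<phi> d"
  then show "\<forall>v. a u u - 2 * \<phi> u \<le> a v v - 2 * \<phi> v"
    using quadratic_functional_at_critical_point nonneg by fastforce
qed

end

lemma bounded_bilinear_imp_bilinear: "bounded_bilinear a \<Longrightarrow> bilinear a"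
  unfolding bilinear_def
  by (auto intro: bounded_linear.linear bounded_bilinear.bounded_linear_left
      bounded_bilinear.bounded_linear_right)

lemma bounded_bilinear_add_scaled:
  fixes a b :: "'a::real_normed_vector \<Rightarrow> 'b::real_normed_vector \<Rightarrow> real"
  assumes a: "bounded_bilinear a" and b: "bounded_bilinear b"
  shows "bounded_bilinear (\<lambda>u v. a u v + c * b u v)"
proof -
  interpret a: bounded_bilinear a by (rule a)
  interpret b: bounded_bilinear b by (rule b)
  obtain Ka Kb where Ka: "\<And>u v. norm (a u v) \<le> norm u * norm v * Ka"
    and Kb: "\<And>u v. norm (b u v) \<le> norm u * norm v * Kb"
    using a.bounded b.bounded by metis
  show ?thesis
  proof
    show "\<exists>K. \<forall>u v. norm (a u v + c * b u v) \<le> norm u * norm v * K"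
    proof (intro exI allI)
      fix u v
      have "norm (a u v + c * b u v) \<le> norm (a u v) + \<bar>c\<bar> * norm (b u v)"
        by (metis norm_triangle_ineq norm_mult real_norm_def)
      also have "\<dots> \<le> norm u * norm v * Ka + \<bar>c\<bar> * (norm u * norm v * Kb)"
        using Ka Kb by (intro add_mono mult_left_mono) auto
      finally show "norm (a u v + c * b u v) \<le> norm u * norm v * (Ka + \<bar>c\<bar> * Kb)"
        by (simp add: algebra_simps)
    qed
  qed (simp_all add: a.add_left a.add_right b.add_left b.add_right a.scaleR_left a.scaleR_right
      b.scaleR_left b.scaleR_right algebra_simps)
qed

theorem lax_milgram_symmetric:
  fixes a :: "'a::{real_normed_vector, complete_space} \<Rightarrow> 'a \<Rightarrow> real"
  assumes a: "bounded_bilinear a" and a_sym: "\<And>u v. a u v = a v u"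
    and c: "c > 0" and coercive: "\<And>u. c * (norm u)\<^sup>2 \<le> a u u"
    and \<phi>: "bounded_linear \<phi>"
  shows "\<exists>u. \<forall>v. a u v = \<phi> v"
proof -
  interpret a: bounded_bilinear a by (rule a)
  interpret \<phi>: bounded_linear \<phi> by (rule \<phi>)
  define E where "E v = a v v - 2 * \<phi> v" for v
  obtain K where K: "\<And>v. norm (\<phi> v) \<le> norm v * K" using \<phi>.bounded by blast
  have "- (K\<^sup>2 / c) \<le> E v" for v
  proof -
    have "0 \<le> (c * norm v - K)\<^sup>2 / c" using c by simp
    also have "\<dots> = c * (norm v)\<^sup>2 - 2 * (norm v * K) + K\<^sup>2 / c"
      using c by (simp add: power2_eq_square field_simps)
    also have "\<dots> \<le> E v + K\<^sup>2 / c"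
      using coercive[of v] K[of v] unfolding E_def by (simp add: abs_le_iff)
    finally show ?thesis by simp
  qed
  then have "bdd_below (range E)" by (meson bdd_belowI2)
  moreover have "continuous_on UNIV E"
    unfolding E_def by (intro continuous_intros a.continuous_on \<phi>.continuous_on)
  moreover have "(c / 2) * (norm (u - v))\<^sup>2 \<le> E u + E v - 2 * E ((1/2) *\<^sub>R (u + v))" for u v
  proof -
    have "E u + E v - 2 * E ((1/2) *\<^sub>R (u + v)) = a (u - v) (u - v) / 2"
      using a_sym[of u v]
      by (simp add: E_def a.add_left a.add_right a.diff_left a.diff_right a.scaleR_left
          a.scaleR_right \<phi>.add \<phi>.scaleR algebra_simps)
    then show ?thesis using coercive[of "u - v"] by simp
  qed
  ultimately obtain u where "\<forall>v. E u \<le> E v"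
    using midpoint_convex_has_minimizer[of E "c / 2"] c by auto
  moreover have "0 \<le> a v v" for v
    using c coercive[of v] by (meson less_imp_le mult_nonneg_nonneg order_trans zero_le_power2)
  ultimately show ?thesis
    using quadratic_functional_minimizer_iff[OF bounded_bilinear_imp_bilinear[OF a] a_sym \<phi>.linear]
    unfolding E_def by blast
qed

corollary riesz_representation:
  fixes \<phi> :: "'a::{real_inner, complete_space} \<Rightarrow> real"
  assumes "bounded_linear \<phi>"
  shows "\<exists>u. \<forall>v. inner u v = \<phi> v"
  using lax_milgram_symmetric[OF bounded_bilinear_inner inner_commute, of 1 \<phi>] assms
  by (simp add: power2_norm_eq_inner)

section \<open>Evaluation maps of a vector-valued RKHS\<close>

lemma inner_ext:
  fixes a b :: "'a::real_inner"
  assumes "\<And>g. inner a g = inner b g"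
  shows "a = b"
proof -
  have "inner (a - b) (a - b) = 0" using assms[of "a - b"] by (simp add: inner_diff_left)
  then show ?thesis by simp
qed

context
  fixes emb :: "'h::{real_inner, complete_space} \<Rightarrow> 'x \<Rightarrow> 'y::real_inner" and x :: 'x
  assumes eval_bl: "bounded_linear (\<lambda>h. emb h x)"
begin

lemma eval_adj_inner: "inner (eval_adj emb x y) g = inner y (emb g x)"
proof -
  have "bounded_linear (\<lambda>g. inner y (emb g x))"
    using bounded_linear_compose[OF bounded_linear_inner_right eval_bl] by simp
  then obtain u where u: "\<And>g. inner u g = inner y (emb g x)"
    using riesz_representation by blast
  have "eval_adj emb x y = u"
    unfolding eval_adj_def
    by (rule the_equality) (use u in \<open>auto intro!: inner_ext[where b = u]\<close>)
  with u show ?thesis by simp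
qed

lemma norm_eval_adj_le:
  assumes eval_le: "\<And>h. norm (emb h x) \<le> \<kappa> * norm h" and "0 \<le> \<kappa>"
  shows "norm (eval_adj emb x y) \<le> \<kappa> * norm y"
proof (rule nonneg_le_of_square_le_mult)
  let ?s = "eval_adj emb x y"
  have "(norm ?s)\<^sup>2 = inner y (emb ?s x)" by (simp add: eval_adj_inner power2_norm_eq_inner)
  also have "\<dots> \<le> norm y * norm (emb ?s x)" by (rule norm_cauchy_schwarz)
  also have "\<dots> \<le> norm y * (\<kappa> * norm ?s)" by (rule mult_left_mono[OF eval_le]) simp
  finally show "(norm ?s)\<^sup>2 \<le> norm ?s * (\<kappa> * norm y)" by (simp add: algebra_simps)
qed (use assms in auto)

lemma bounded_linear_eval_adj: "bounded_linear (eval_adj emb x)"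
proof -
  obtain K where K: "\<And>h. norm (emb h x) \<le> norm h * K" "K > 0"
    using bounded_linear.pos_bounded[OF eval_bl] by blast
  show ?thesis
  proof (rule bounded_linear_intro)
    show "norm (eval_adj emb x y) \<le> norm y * K" for y
      using norm_eval_adj_le[of K y] K by (simp add: mult.commute)
    show "eval_adj emb x (y + z) = eval_adj emb x y + eval_adj emb x z" for y z
      by (rule inner_ext) (simp add: eval_adj_inner inner_add_left)
    show "eval_adj emb x (r *\<^sub>R y) = r *\<^sub>R eval_adj emb x y" for r y
      by (rule inner_ext) (simp add: eval_adj_inner)
  qed
qed

lemma norm_eval_le_sqrt_kernel_bound:
  assumes kernel_bound: "onorm (rk_kernel emb x x) \<le> B"
  shows "norm (emb h x) \<le> sqrt B * norm h"
proof -
  have K: "bounded_linear (rk_kernel emb x x)"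
    unfolding rk_kernel_def using bounded_linear_compose[OF eval_bl bounded_linear_eval_adj] .
  have B: "0 \<le> B" using onorm_pos_le[OF K] kernel_bound by linarith
  have adj: "norm (eval_adj emb x y) \<le> sqrt B * norm y" for y
  proof (rule power2_le_imp_le)
    have "(norm (eval_adj emb x y))\<^sup>2 = inner y (rk_kernel emb x x y)"
      unfolding rk_kernel_def power2_norm_eq_inner eval_adj_inner ..
    also have "\<dots> \<le> norm y * norm (rk_kernel emb x x y)" by (rule norm_cauchy_schwarz)
    also have "\<dots> \<le> norm y * (B * norm y)"
      using order_trans[OF onorm[OF K] mult_right_mono[OF kernel_bound norm_ge_zero]]
      by (rule mult_left_mono) simp
    also have "\<dots> = (sqrt B * norm y)\<^sup>2" using B by (simp add: power2_eq_square)
    finally show "(norm (eval_adj emb x y))\<^sup>2 \<le> (sqrt B * norm y)\<^sup>2" .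
  qed (use B in simp)
  show ?thesis
  proof (rule nonneg_le_of_square_le_mult)
    have "(norm (emb h x))\<^sup>2 = inner (eval_adj emb x (emb h x)) h"
      unfolding power2_norm_eq_inner eval_adj_inner ..
    also have "\<dots> \<le> norm (eval_adj emb x (emb h x)) * norm h" by (rule norm_cauchy_schwarz)
    also have "\<dots> \<le> sqrt B * norm (emb h x) * norm h" by (rule mult_right_mono[OF adj]) simp
    finally show "(norm (emb h x))\<^sup>2 \<le> norm (emb h x) * (sqrt B * norm h)"
      by (simp add: algebra_simps)
  qed (use B in simp_all)
qed

end

section \<open>Measurability in separable spaces\<close>

lemma dense_sequence_exists:
  "\<exists>d :: nat \<Rightarrow> 'b::{metric_space, second_countable_topology}. \<forall>x e. 0 < e \<longrightarrow> (\<exists>j. dist (d j) x < e)"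
proof -
  obtain D :: "'b set" where "countable D" and D: "\<And>X. open X \<Longrightarrow> X \<noteq> {} \<Longrightarrow> \<exists>d\<in>D. d \<in> X"
    by (erule countable_dense_setE)
  have "\<exists>j. dist (from_nat_into D j) x < e" if "0 < e" for x e
  proof -
    obtain d where "d \<in> D" "d \<in> ball x e" using D[of "ball x e"] \<open>0 < e\<close> by auto
    moreover obtain j where "from_nat_into D j = d"
      using from_nat_into_surj[OF \<open>countable D\<close> \<open>d \<in> D\<close>] by blast
    ultimately show ?thesis by (auto simp: dist_commute)
  qed
  then show ?thesis by blast
qed

lemma borel_measurable_by_approximating_indices:
  fixes F :: "'a \<Rightarrow> 'b::metric_space" and d :: "nat \<Rightarrow> 'b"
  assumes P_sets: "\<And>k j. {\<omega> \<in> space M. P k j \<omega>} \<in> sets M"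
    and P_ex: "\<And>k \<omega>. \<omega> \<in> space M \<Longrightarrow> \<exists>j. P k j \<omega>"
    and P_close: "\<And>k j \<omega>. \<omega> \<in> space M \<Longrightarrow> P k j \<omega> \<Longrightarrow> dist (d j) (F \<omega>) \<le> inverse (real (Suc k))"
  shows "F \<in> borel_measurable M"
proof (rule borel_measurable_LIMSEQ_metric)
  have [measurable]: "(\<lambda>\<omega>. P k j \<omega>) \<in> measurable M (count_space UNIV)" for k j
    using P_sets[of k j] by (simp add: measurable_count_space_eq2_countable)
  show "(\<lambda>\<omega>. d (LEAST j. P k j \<omega>)) \<in> borel_measurable M" for k
    by (rule measurable_compose[OF measurable_Least]) simp_all
  fix \<omega> assume \<omega>: "\<omega> \<in> space M"
  have "\<forall>k. norm (dist (d (LEAST j. P k j \<omega>)) (F \<omega>)) \<le> inverse (real (Suc k))"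
    using P_close[OF \<omega> LeastI_ex[OF P_ex[OF \<omega>]]] by simp
  then have "(\<lambda>k. dist (d (LEAST j. P k j \<omega>)) (F \<omega>)) \<longlonglongrightarrow> 0"
    by (rule Lim_null_comparison[OF always_eventually LIMSEQ_inverse_real_of_nat])
  then show "(\<lambda>k. d (LEAST j. P k j \<omega>)) \<longlonglongrightarrow> F \<omega>"
    by (rule tendsto_dist_iff[THEN iffD2])
qed

text \<open>With a dense sequence d, the squared norm is the supremum of the weakly measurable
  quantities 2 inner v (d i) - |d i|^2 = |v|^2 - |v - d i|^2.\<close>
lemma norm_sq_le_iff_dense:
  fixes d :: "nat \<Rightarrow> 'b::real_inner"
  assumes dense: "\<And>x e. 0 < e \<Longrightarrow> \<exists>j. dist (d j) x < e"
  shows "(norm v)\<^sup>2 \<le> r \<longleftrightarrow> (\<forall>i. 2 * inner v (d i) - (norm (d i))\<^sup>2 \<le> r)"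
proof -
  have gap: "2 * inner v w - (norm w)\<^sup>2 = (norm v)\<^sup>2 - (norm (v - w))\<^sup>2" for w
    by (simp add: power2_norm_eq_inner inner_diff_left inner_diff_right inner_commute)
  show ?thesis
  proof
    assume "(norm v)\<^sup>2 \<le> r"
    then show "\<forall>i. 2 * inner v (d i) - (norm (d i))\<^sup>2 \<le> r"
      using gap zero_le_power2 by (smt (verit))
  next
    assume le: "\<forall>i. 2 * inner v (d i) - (norm (d i))\<^sup>2 \<le> r"
    show "(norm v)\<^sup>2 \<le> r"
    proof (rule ccontr)
      assume "\<not> (norm v)\<^sup>2 \<le> r"
      then have "0 < sqrt ((norm v)\<^sup>2 - r)" by simp
      then obtain i where "dist (d i) v < sqrt ((norm v)\<^sup>2 - r)" using dense by blast
      then have "(norm (v - d i))\<^sup>2 < (norm v)\<^sup>2 - r"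
        using real_sqrt_less_iff[of "(norm (v - d i))\<^sup>2"] by (simp add: dist_norm norm_minus_commute)
      then show False using le[rule_format, of i] gap[of "d i"] by linarith
    qed
  qed
qed

lemma borel_measurable_weakly_measurable:
  fixes F :: "'a \<Rightarrow> 'b::{real_inner, second_countable_topology}"
  assumes [measurable]: "\<And>g. (\<lambda>\<omega>. inner (F \<omega>) g) \<in> borel_measurable M"
  shows "F \<in> borel_measurable M"
proof -
  obtain d :: "nat \<Rightarrow> 'b" where dense: "\<And>x e. 0 < e \<Longrightarrow> \<exists>j. dist (d j) x < e"
    using dense_sequence_exists by blast
  show ?thesis
  proof (rule borel_measurable_by_approximating_indices[where d = d
        and P = "\<lambda>k j \<omega>. (norm (F \<omega> - d j))\<^sup>2 \<le> (inverse (real (Suc k)))\<^sup>2"])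
    show "{\<omega> \<in> space M. (norm (F \<omega> - d j))\<^sup>2 \<le> (inverse (real (Suc k)))\<^sup>2} \<in> sets M" for k j
    proof -
      let ?t = "(inverse (real (Suc k)))\<^sup>2"
      have "{\<omega> \<in> space M. (norm (F \<omega> - d j))\<^sup>2 \<le> ?t} = {\<omega> \<in> space M.
          \<forall>i. 2 * (inner (F \<omega>) (d i) - inner (d j) (d i)) - (norm (d i))\<^sup>2 \<le> ?t}"
        using norm_sq_le_iff_dense[OF dense] by (simp add: inner_diff_left)
      also have "\<dots> \<in> sets M" by measurable
      finally show ?thesis .
    qed
    show "\<exists>j. (norm (F \<omega> - d j))\<^sup>2 \<le> (inverse (real (Suc k)))\<^sup>2" for k \<omega>
      using dense[of "inverse (real (Suc k))" "F \<omega>"]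
      by (auto simp: dist_norm norm_minus_commute intro!: power_mono less_imp_le)
    show "dist (d j) (F \<omega>) \<le> inverse (real (Suc k))"
      if "(norm (F \<omega> - d j))\<^sup>2 \<le> (inverse (real (Suc k)))\<^sup>2" for k j \<omega>
      using power2_le_imp_le[OF that] by (simp add: dist_norm norm_minus_commute)
  qed
qed

lemma isCont_dense_sequence_less:
  fixes f :: "'b::metric_space \<Rightarrow> real"
  assumes cont: "isCont f x" and dense: "\<And>x e. 0 < e \<Longrightarrow> \<exists>j. dist (d j) x < e" and "0 < e"
  shows "\<exists>i. f (d i) < f x + e"
proof -
  obtain \<delta> where "0 < \<delta>" and \<delta>: "\<And>y. dist y x < \<delta> \<Longrightarrow> dist (f y) (f x) < e"
    using cont \<open>0 < e\<close> unfolding continuous_at_eps_delta by blast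
  obtain i where "dist (d i) x < \<delta>" using dense \<open>0 < \<delta>\<close> by blast
  then have "dist (f (d i)) (f x) < e" by (rule \<delta>)
  then have "f (d i) < f x + e" by (simp add: dist_real_def abs_less_iff)
  then show ?thesis ..
qed

lemma borel_measurable_argmin:
  fixes F :: "'a \<Rightarrow> 'b::{metric_space, second_countable_topology}"
  assumes J_meas [measurable]: "\<And>h. (\<lambda>\<omega>. J \<omega> h) \<in> borel_measurable M" and c: "0 < c"
    and growth: "\<And>\<omega> h. \<omega> \<in> space M \<Longrightarrow> J \<omega> (F \<omega>) + c * (dist h (F \<omega>))\<^sup>2 \<le> J \<omega> h"
    and cont: "\<And>\<omega>. \<omega> \<in> space M \<Longrightarrow> isCont (J \<omega>) (F \<omega>)"
  shows "F \<in> borel_measurable M"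
proof -
  obtain d :: "nat \<Rightarrow> 'b" where dense: "\<And>x e. 0 < e \<Longrightarrow> \<exists>j. dist (d j) x < e"
    using dense_sequence_exists by blast
  have near_min: "\<exists>i. J \<omega> (d i) < J \<omega> (F \<omega>) + e" if "\<omega> \<in> space M" "0 < e" for \<omega> e
    using cont[OF that(1)] dense that(2) by (rule isCont_dense_sequence_less)
  let ?t = "\<lambda>k. c * (inverse (real (Suc k)))\<^sup>2"
  \<comment> \<open>Select a dense point that is ?t k-minimal among all dense points; by quadratic growth it
    lies within 1 / (k + 1) of the minimiser.\<close>
  show ?thesis
  proof (rule borel_measurable_by_approximating_indices[where d = d
        and P = "\<lambda>k j \<omega>. \<forall>i. J \<omega> (d j) \<le> J \<omega> (d i) + ?t k"])
    show "{\<omega> \<in> space M. \<forall>i. J \<omega> (d j) \<le> J \<omega> (d i) + ?t k} \<in> sets M" for k j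
      by measurable
    show "\<exists>j. \<forall>i. J \<omega> (d j) \<le> J \<omega> (d i) + ?t k" if \<omega>: "\<omega> \<in> space M" for k \<omega>
    proof -
      obtain j where j: "J \<omega> (d j) < J \<omega> (F \<omega>) + ?t k" using near_min[OF \<omega>, of "?t k"] c by auto
      have "J \<omega> (F \<omega>) \<le> J \<omega> h" for h
        using growth[OF \<omega>, of h] c by (smt (verit) zero_le_mult_iff zero_le_power2)
      then have "J \<omega> (d j) \<le> J \<omega> (d i) + ?t k" for i
        using j by (smt (verit))
      then show ?thesis by blast
    qed
    show "dist (d j) (F \<omega>) \<le> inverse (real (Suc k))"
      if \<omega>: "\<omega> \<in> space M" and j: "\<forall>i. J \<omega> (d j) \<le> J \<omega> (d i) + ?t k" for k j \<omega>
    proof -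
      have "c * (dist (d j) (F \<omega>))\<^sup>2 \<le> ?t k"
      proof (rule field_le_epsilon)
        fix e :: real assume "0 < e"
        then obtain i where "J \<omega> (d i) < J \<omega> (F \<omega>) + e" using near_min[OF \<omega>] by blast
        then show "c * (dist (d j) (F \<omega>))\<^sup>2 \<le> ?t k + e"
          using growth[OF \<omega>, of "d j"] j[rule_format, of i] by linarith
      qed
      then have "(dist (d j) (F \<omega>))\<^sup>2 \<le> (inverse (real (Suc k)))\<^sup>2" using c by simp
      then show ?thesis by (rule power2_le_imp_le) simp
    qed
  qed
qed

section \<open>Square-integrable functions\<close>

text \<open>The library versions of the next two lemmas (integrableI_bounded, integrable_norm)
  require the sort banach, which a type variable of sort {real_inner, complete_space} lacks.\<close>
lemma integrableI_bounded_complete: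
  fixes f :: "'a \<Rightarrow> 'b::{real_normed_vector, complete_space, second_countable_topology}"
  assumes f [measurable]: "f \<in> borel_measurable M" and fin: "(\<integral>\<^sup>+x. norm (f x) \<partial>M) < \<infinity>"
  shows "integrable M f"
proof -
  obtain s where s: "\<And>i. simple_function M (s i)"
    and s_lim: "\<And>x. x \<in> space M \<Longrightarrow> (\<lambda>i. s i x) \<longlonglongrightarrow> f x"
    and s_bound: "\<And>i x. x \<in> space M \<Longrightarrow> norm (s i x) \<le> 2 * norm (f x)"
    using borel_measurable_implies_sequence_metric[OF f, of 0] by simp metis
  have fin2: "(\<integral>\<^sup>+x. ennreal (2 * norm (f x)) \<partial>M) < \<infinity>"
    using fin by (simp add: ennreal_mult nn_integral_cmult ennreal_mult_less_top)
  have s_int: "Bochner_Integration.simple_bochner_integrable M (s i)" for i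
  proof (rule Bochner_Integration.simple_bochner_integrableI_bounded[OF s])
    have "(\<integral>\<^sup>+x. norm (s i x) \<partial>M) \<le> (\<integral>\<^sup>+x. ennreal (2 * norm (f x)) \<partial>M)"
      by (intro nn_integral_mono) (simp add: s_bound)
    then show "(\<integral>\<^sup>+x. norm (s i x) \<partial>M) < \<infinity>" using fin2 by (simp add: le_less_trans)
  qed
  have dist_lim: "(\<lambda>i. \<integral>\<^sup>+x. norm (f x - s i x) \<partial>M) \<longlonglongrightarrow> 0"
    by (rule nn_integral_dominated_convergence_norm[where w = "\<lambda>x. 2 * norm (f x)"])
       (use s s_lim s_bound fin2 in \<open>auto intro: borel_measurable_simple_function\<close>)
  let ?I = "\<lambda>i. Bochner_Integration.simple_bochner_integral M (s i)"
  have "Cauchy ?I"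
  proof (rule metric_CauchyI)
    fix e :: real assume "0 < e"
    then obtain N where N: "\<And>i. N \<le> i \<Longrightarrow> (\<integral>\<^sup>+x. norm (f x - s i x) \<partial>M) < ennreal (e / 2)"
      using order_tendstoD(2)[OF dist_lim, of "ennreal (e / 2)"] by (auto simp: eventually_sequentially)
    have "dist (?I i) (?I j) < e" if "N \<le> i" "N \<le> j" for i j
    proof -
      have "ennreal (norm (?I i - ?I j))
          \<le> (\<integral>\<^sup>+x. norm (f x - s i x) \<partial>M) + (\<integral>\<^sup>+x. norm (f x - s j x) \<partial>M)"
        by (rule simple_bochner_integral_bounded[OF f s_int s_int])
      also have "\<dots> < ennreal (e / 2) + ennreal (e / 2)" using N that by (intro add_strict_mono)
      finally show ?thesis using \<open>0 < e\<close> by (simp add: dist_norm ennreal_less_iff flip: ennreal_plus)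
    qed
    then show "\<exists>N. \<forall>i\<ge>N. \<forall>j\<ge>N. dist (?I i) (?I j) < e" by blast
  qed
  then obtain I where "?I \<longlonglongrightarrow> I" by (auto simp: Cauchy_convergent_iff convergent_def)
  then have "has_bochner_integral M f I"
    by (rule has_bochner_integral.intros[OF f s_int dist_lim])
  then show ?thesis by (rule integrable.intros)
qed

lemma integrable_norm_cancel_complete:
  fixes f :: "'a \<Rightarrow> 'b::{real_normed_vector, complete_space, second_countable_topology}"
  assumes "f \<in> borel_measurable M" "integrable M (\<lambda>x. norm (f x))"
  shows "integrable M f"
  using assms integrableI_bounded_complete by (auto simp: integrable_iff_bounded)

lemma integrable_imp_integrable_norm:
  fixes f :: "'a \<Rightarrow> 'b::{real_normed_vector, second_countable_topology}"
  assumes "integrable M f"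
  shows "integrable M (\<lambda>x. norm (f x))"
proof -
  obtain I where "has_bochner_integral M f I" using assms by (auto simp: integrable.simps)
  then have "(\<integral>\<^sup>+x. norm (f x) \<partial>M) < \<infinity>" by (rule has_bochner_integral_implies_finite_norm)
  moreover have "f \<in> borel_measurable M" using assms by (rule borel_measurable_integrable)
  ultimately show ?thesis by (intro integrableI_bounded) auto
qed

lemma inner_le_half_sq_sum:
  fixes a b :: "'a::real_inner"
  shows "inner a b \<le> ((norm a)\<^sup>2 + (norm b)\<^sup>2) / 2"
proof -
  have "0 \<le> (norm (a - b))\<^sup>2" by simp
  also have "\<dots> = (norm a)\<^sup>2 - 2 * inner a b + (norm b)\<^sup>2"
    by (simp add: power2_norm_eq_inner inner_diff_left inner_diff_right inner_commute)
  finally show ?thesis by simp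
qed

lemma in_L2_norm_mult_integrable:
  fixes f :: "'a \<Rightarrow> 'b::{real_normed_vector, second_countable_topology}"
    and g :: "'a \<Rightarrow> 'c::{real_normed_vector, second_countable_topology}"
  assumes "in_L2 M f" "in_L2 M g"
  shows "integrable M (\<lambda>\<omega>. norm (f \<omega>) * norm (g \<omega>))"
proof (rule Bochner_Integration.integrable_bound)
  show "integrable M (\<lambda>\<omega>. (norm (f \<omega>))\<^sup>2 + (norm (g \<omega>))\<^sup>2)"
    using assms unfolding in_L2_def by auto
  show "(\<lambda>\<omega>. norm (f \<omega>) * norm (g \<omega>)) \<in> borel_measurable M"
    using assms unfolding in_L2_def by auto
  show "AE \<omega> in M. norm (norm (f \<omega>) * norm (g \<omega>)) \<le> norm ((norm (f \<omega>))\<^sup>2 + (norm (g \<omega>))\<^sup>2)"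
  proof (rule AE_I2)
    fix \<omega>
    have "2 * norm (f \<omega>) * norm (g \<omega>) \<le> (norm (f \<omega>))\<^sup>2 + (norm (g \<omega>))\<^sup>2"
      by (rule sum_squares_bound)
    moreover have "0 \<le> norm (f \<omega>) * norm (g \<omega>)" by simp
    ultimately have "norm (f \<omega>) * norm (g \<omega>) \<le> (norm (f \<omega>))\<^sup>2 + (norm (g \<omega>))\<^sup>2"
      by linarith
    then show "norm (norm (f \<omega>) * norm (g \<omega>)) \<le> norm ((norm (f \<omega>))\<^sup>2 + (norm (g \<omega>))\<^sup>2)"
      by simp
  qed
qed

lemma in_L2_inner_integrable:
  fixes f g :: "'a \<Rightarrow> 'b::{real_inner, second_countable_topology}"
  assumes "in_L2 M f" "in_L2 M g"
  shows "integrable M (\<lambda>\<omega>. inner (f \<omega>) (g \<omega>))"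
  by (rule Bochner_Integration.integrable_bound[OF in_L2_norm_mult_integrable[OF assms]])
    (use assms in \<open>auto simp: in_L2_def Cauchy_Schwarz_ineq2\<close>)

lemma in_L2_diff:
  fixes f g :: "'a \<Rightarrow> 'b::{real_normed_vector, second_countable_topology}"
  assumes f: "in_L2 M f" and g: "in_L2 M g"
  shows "in_L2 M (\<lambda>\<omega>. f \<omega> - g \<omega>)"
  unfolding in_L2_def
proof
  show "integrable M (\<lambda>\<omega>. (norm (f \<omega> - g \<omega>))\<^sup>2)"
  proof (rule Bochner_Integration.integrable_bound)
    show "integrable M (\<lambda>\<omega>. 2 * (norm (f \<omega>))\<^sup>2 + 2 * (norm (g \<omega>))\<^sup>2)"
      using f g unfolding in_L2_def by auto
    have "(norm (f \<omega> - g \<omega>))\<^sup>2 \<le> 2 * (norm (f \<omega>))\<^sup>2 + 2 * (norm (g \<omega>))\<^sup>2" for \<omega>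
    proof -
      have "(norm (f \<omega> - g \<omega>))\<^sup>2 \<le> (norm (f \<omega>) + norm (g \<omega>))\<^sup>2"
        by (simp add: power_mono norm_triangle_ineq4)
      then show ?thesis using sum_squares_bound[of "norm (f \<omega>)" "norm (g \<omega>)"]
        by (simp add: power2_sum)
    qed
    then show "AE \<omega> in M. norm ((norm (f \<omega> - g \<omega>))\<^sup>2) \<le> norm (2 * (norm (f \<omega>))\<^sup>2 + 2 * (norm (g \<omega>))\<^sup>2)"
      by (auto intro!: AE_I2)
  qed (use f g in \<open>auto simp: in_L2_def\<close>)
qed (use f g in \<open>auto simp: in_L2_def\<close>)

lemma (in finite_measure) in_L2_bounded:
  fixes f :: "'a \<Rightarrow> 'b::{real_normed_vector, second_countable_topology}"
  assumes "f \<in> borel_measurable M" "\<And>\<omega>. \<omega> \<in> space M \<Longrightarrow> norm (f \<omega>) \<le> C"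
  shows "in_L2 M f"
  unfolding in_L2_def
proof
  show "integrable M (\<lambda>\<omega>. (norm (f \<omega>))\<^sup>2)"
    by (rule Bochner_Integration.integrable_bound[of _ "\<lambda>_. C\<^sup>2"]) (use assms in \<open>auto intro!: AE_I2 power_mono\<close>)
qed (rule assms)

lemma (in finite_measure) in_L2_integrable_norm:
  fixes f :: "'a \<Rightarrow> 'b::{real_normed_vector, second_countable_topology}"
  assumes "in_L2 M f"
  shows "integrable M (\<lambda>\<omega>. norm (f \<omega>))"
  by (rule square_integrable_imp_integrable) (use assms in \<open>auto simp: in_L2_def\<close>)

lemma (in finite_measure) in_L2_integrable:
  fixes f :: "'a \<Rightarrow> 'b::{real_normed_vector, complete_space, second_countable_topology}"
  assumes "in_L2 M f"
  shows "integrable M f"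
  using assms in_L2_integrable_norm unfolding in_L2_def by (blast intro: integrable_norm_cancel_complete)

lemma L2_sq_norm_distr:
  fixes g :: "'x \<Rightarrow> 'y::{real_normed_vector, second_countable_topology}"
  assumes "X \<in> measurable M MX" "g \<in> borel_measurable MX"
  shows "L2_sq_norm (distr M MX X) g = (\<integral>\<omega>. (norm (g (X \<omega>)))\<^sup>2 \<partial>M)"
  unfolding L2_sq_norm_def using assms by (intro integral_distr) auto

section \<open>Orthogonality of the regression residual\<close>

locale cond_exp_model = prob_space M for M :: "'a measure" +
  fixes MX :: "'x measure" and X :: "'a \<Rightarrow> 'x"
    and Y :: "'a \<Rightarrow> 'y::{real_inner, complete_space, second_countable_topology}"
    and fstar :: "'x \<Rightarrow> 'y"
  assumes X_meas [measurable]: "X \<in> measurable M MX"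
    and Y_meas [measurable]: "Y \<in> borel_measurable M"
    and Y_L2: "integrable M (\<lambda>\<omega>. (norm (Y \<omega>))\<^sup>2)"
    and cond_exp: "is_cond_exp_given M MX X Y fstar"
begin

lemma fstar_meas [measurable]: "fstar \<in> borel_measurable MX"
  using cond_exp unfolding is_cond_exp_given_def by auto

lemma integrable_fstar_X: "integrable M (\<lambda>\<omega>. fstar (X \<omega>))"
  using cond_exp unfolding is_cond_exp_given_def by auto

lemma Y_in_L2: "in_L2 M Y"
  unfolding in_L2_def using Y_L2 by simp

lemma integrable_norm_residual: "integrable M (\<lambda>\<omega>. norm (Y \<omega> - fstar (X \<omega>)))"
proof -
  have "integrable M (\<lambda>\<omega>. norm (Y \<omega>) + norm (fstar (X \<omega>)))"
    using in_L2_integrable_norm[OF Y_in_L2] integrable_imp_integrable_norm[OF integrable_fstar_X]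
    by (rule Bochner_Integration.integrable_add)
  then show ?thesis
    by (rule Bochner_Integration.integrable_bound) (auto intro!: AE_I2 norm_triangle_ineq4)
qed

lemma residual_orthogonal_indicator:
  assumes A [measurable]: "A \<in> sets MX"
  shows "(\<integral>\<omega>. indicator A (X \<omega>) * inner c (Y \<omega> - fstar (X \<omega>)) \<partial>M) = 0"
proof -
  have localize: "integrable M (\<lambda>\<omega>. indicator A (X \<omega>) *\<^sub>R g \<omega>)" if g: "integrable M g"
    for g :: "'a \<Rightarrow> 'y"
  proof (rule integrable_norm_cancel_complete)
    have [measurable]: "g \<in> borel_measurable M" using g by (rule borel_measurable_integrable)
    show "(\<lambda>\<omega>. indicator A (X \<omega>) *\<^sub>R g \<omega>) \<in> borel_measurable M" by measurable
    show "integrable M (\<lambda>\<omega>. norm (indicator A (X \<omega>) *\<^sub>R g \<omega>))"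
      by (rule Bochner_Integration.integrable_bound[OF integrable_imp_integrable_norm[OF g]])
        (auto intro!: AE_I2 split: split_indicator)
  qed
  have int_Y: "integrable M (\<lambda>\<omega>. indicator A (X \<omega>) *\<^sub>R Y \<omega>)"
    by (rule localize[OF in_L2_integrable[OF Y_in_L2]])
  have int_fstar: "integrable M (\<lambda>\<omega>. indicator A (X \<omega>) *\<^sub>R fstar (X \<omega>))"
    by (rule localize[OF integrable_fstar_X])
  have "(\<integral>\<omega>. indicator A (X \<omega>) * inner c (Y \<omega> - fstar (X \<omega>)) \<partial>M)
      = (\<integral>\<omega>. inner c (indicator A (X \<omega>) *\<^sub>R Y \<omega> - indicator A (X \<omega>) *\<^sub>R fstar (X \<omega>)) \<partial>M)"
    by (simp add: inner_diff_right right_diff_distrib)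
  also have "\<dots> = inner c (\<integral>\<omega>. indicator A (X \<omega>) *\<^sub>R Y \<omega> - indicator A (X \<omega>) *\<^sub>R fstar (X \<omega>) \<partial>M)"
    using int_Y int_fstar by (intro integral_inner_right) simp
  also have "\<dots> = inner c ((\<integral>\<omega>. indicator A (X \<omega>) *\<^sub>R Y \<omega> \<partial>M) - (\<integral>\<omega>. indicator A (X \<omega>) *\<^sub>R fstar (X \<omega>) \<partial>M))"
    by (simp add: Bochner_Integration.integral_diff[OF int_Y int_fstar])
  also have "\<dots> = 0"
    using cond_exp A by (simp add: is_cond_exp_given_def)
  finally show ?thesis .
qed

lemma residual_orthogonal_simple:
  assumes s: "simple_function MX s"
  shows "(\<integral>\<omega>. inner (s (X \<omega>)) (Y \<omega> - fstar (X \<omega>)) \<partial>M) = 0"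
proof -
  let ?A = "\<lambda>v. s -` {v} \<inter> space MX"
  have A [measurable]: "?A v \<in> sets MX" for v by (rule simple_functionD(2)[OF s])
  have s_sum: "s x = (\<Sum>v\<in>s ` space MX. indicator (?A v) x *\<^sub>R v)" if "x \<in> space MX" for x
  proof -
    have "(\<Sum>v\<in>s ` space MX. indicator (?A v) x *\<^sub>R v) = (\<Sum>v\<in>s ` space MX. if v = s x then v else 0)"
      using that by (intro sum.cong) (auto simp: indicator_def)
    also have "\<dots> = s x" using simple_functionD(1)[OF s] that by (simp add: sum.delta)
    finally show ?thesis by simp
  qed
  have int: "integrable M (\<lambda>\<omega>. indicator (?A v) (X \<omega>) * inner v (Y \<omega> - fstar (X \<omega>)))" for v
    using integrable_mult_right[OF integrable_norm_residual, of "norm v"]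
    by (rule Bochner_Integration.integrable_bound)
      (auto intro!: AE_I2 split: split_indicator simp: Cauchy_Schwarz_ineq2)
  have "(\<integral>\<omega>. inner (s (X \<omega>)) (Y \<omega> - fstar (X \<omega>)) \<partial>M)
      = (\<integral>\<omega>. (\<Sum>v\<in>s ` space MX. indicator (?A v) (X \<omega>) * inner v (Y \<omega> - fstar (X \<omega>))) \<partial>M)"
  proof (rule Bochner_Integration.integral_cong[OF refl])
    fix \<omega> assume "\<omega> \<in> space M"
    then have "X \<omega> \<in> space MX" by (rule measurable_space[OF X_meas])
    then show "inner (s (X \<omega>)) (Y \<omega> - fstar (X \<omega>))
        = (\<Sum>v\<in>s ` space MX. indicator (?A v) (X \<omega>) * inner v (Y \<omega> - fstar (X \<omega>)))"
      by (subst s_sum) (simp_all add: inner_sum_left)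
  qed
  also have "\<dots> = 0"
    using int by (simp add: residual_orthogonal_indicator)
  finally show ?thesis .
qed

lemma residual_orthogonal:
  assumes \<phi> [measurable]: "\<phi> \<in> borel_measurable MX"
    and int: "integrable M (\<lambda>\<omega>. norm (\<phi> (X \<omega>)) * norm (Y \<omega> - fstar (X \<omega>)))"
  shows "(\<integral>\<omega>. inner (\<phi> (X \<omega>)) (Y \<omega> - fstar (X \<omega>)) \<partial>M) = 0"
proof -
  obtain s where s: "\<And>i. simple_function MX (s i)"
    and s_lim: "\<And>x. x \<in> space MX \<Longrightarrow> (\<lambda>i. s i x) \<longlonglongrightarrow> \<phi> x"
    and s_bound: "\<And>i x. x \<in> space MX \<Longrightarrow> norm (s i x) \<le> 2 * norm (\<phi> x)"
    using borel_measurable_implies_sequence_metric[OF \<phi>, of 0] by simp metis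
  have [measurable]: "s i \<in> borel_measurable MX" for i
    using s by (rule borel_measurable_simple_function)
  have "(\<lambda>i. \<integral>\<omega>. inner (s i (X \<omega>)) (Y \<omega> - fstar (X \<omega>)) \<partial>M)
      \<longlonglongrightarrow> (\<integral>\<omega>. inner (\<phi> (X \<omega>)) (Y \<omega> - fstar (X \<omega>)) \<partial>M)"
  proof (rule integral_dominated_convergence
      [where w = "\<lambda>\<omega>. 2 * (norm (\<phi> (X \<omega>)) * norm (Y \<omega> - fstar (X \<omega>)))"])
    show "AE \<omega> in M. (\<lambda>i. inner (s i (X \<omega>)) (Y \<omega> - fstar (X \<omega>)))
        \<longlonglongrightarrow> inner (\<phi> (X \<omega>)) (Y \<omega> - fstar (X \<omega>))"
      using measurable_space[OF X_meas] s_lim by (auto intro!: AE_I2 tendsto_intros)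
    show "AE \<omega> in M. norm (inner (s i (X \<omega>)) (Y \<omega> - fstar (X \<omega>)))
        \<le> 2 * (norm (\<phi> (X \<omega>)) * norm (Y \<omega> - fstar (X \<omega>)))" for i
    proof (rule AE_I2)
      fix \<omega> assume "\<omega> \<in> space M"
      then have s_le: "norm (s i (X \<omega>)) \<le> 2 * norm (\<phi> (X \<omega>))"
        using measurable_space[OF X_meas] s_bound by blast
      have "norm (inner (s i (X \<omega>)) (Y \<omega> - fstar (X \<omega>)))
          \<le> norm (s i (X \<omega>)) * norm (Y \<omega> - fstar (X \<omega>))"
        using Cauchy_Schwarz_ineq2 by simp
      also have "\<dots> \<le> 2 * norm (\<phi> (X \<omega>)) * norm (Y \<omega> - fstar (X \<omega>))"
        using s_le by (rule mult_right_mono) simp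
      finally show "norm (inner (s i (X \<omega>)) (Y \<omega> - fstar (X \<omega>)))
          \<le> 2 * (norm (\<phi> (X \<omega>)) * norm (Y \<omega> - fstar (X \<omega>)))"
        by (simp add: mult.assoc)
    qed
  qed (use int in simp_all)
  moreover have "(\<lambda>i. \<integral>\<omega>. inner (s i (X \<omega>)) (Y \<omega> - fstar (X \<omega>)) \<partial>M) = (\<lambda>i. 0)"
    using residual_orthogonal_simple[OF s] by simp
  ultimately show ?thesis using LIMSEQ_unique tendsto_const by metis
qed

lemma sq_integral_le_if_inner_fstar_eq:
  assumes \<phi> [measurable]: "\<phi> \<in> borel_measurable MX" and bounded: "\<And>x. norm (\<phi> x) \<le> C"
    and proj: "\<And>x. inner (\<phi> x) (fstar x) = (norm (\<phi> x))\<^sup>2"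
  shows "(\<integral>\<omega>. (norm (\<phi> (X \<omega>)))\<^sup>2 \<partial>M) \<le> (\<integral>\<omega>. (norm (Y \<omega>))\<^sup>2 \<partial>M)"
proof -
  have \<phi>_L2: "in_L2 M (\<lambda>\<omega>. \<phi> (X \<omega>))" by (rule in_L2_bounded) (auto intro: bounded)
  then have int_sq: "integrable M (\<lambda>\<omega>. (norm (\<phi> (X \<omega>)))\<^sup>2)" by (simp add: in_L2_def)
  have int_Y: "integrable M (\<lambda>\<omega>. inner (\<phi> (X \<omega>)) (Y \<omega>))"
    by (rule in_L2_inner_integrable[OF \<phi>_L2 Y_in_L2])
  have "integrable M (\<lambda>\<omega>. norm (\<phi> (X \<omega>)) * norm (Y \<omega> - fstar (X \<omega>)))"
  proof (rule Bochner_Integration.integrable_bound[OF integrable_mult_right[OF integrable_norm_residual]])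
    have "norm (\<phi> x) * norm r \<le> \<bar>C * norm r\<bar>" for x and r :: 'y
      using mult_right_mono[OF bounded[of x], of "norm r"] abs_ge_self by (meson norm_ge_zero order_trans)
    then show "AE \<omega> in M. norm (norm (\<phi> (X \<omega>)) * norm (Y \<omega> - fstar (X \<omega>)))
        \<le> norm (C * norm (Y \<omega> - fstar (X \<omega>)))" by simp
  qed simp
  then have "(\<integral>\<omega>. inner (\<phi> (X \<omega>)) (Y \<omega> - fstar (X \<omega>)) \<partial>M) = 0"
    by (rule residual_orthogonal[OF \<phi>])
  then have "(\<integral>\<omega>. (norm (\<phi> (X \<omega>)))\<^sup>2 \<partial>M) = (\<integral>\<omega>. inner (\<phi> (X \<omega>)) (Y \<omega>) \<partial>M)"
    using int_sq int_Y by (simp add: inner_diff_right proj)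
  also have "\<dots> \<le> (\<integral>\<omega>. ((norm (\<phi> (X \<omega>)))\<^sup>2 + (norm (Y \<omega>))\<^sup>2) / 2 \<partial>M)"
  proof (rule Bochner_Integration.integral_mono[OF int_Y])
    show "integrable M (\<lambda>\<omega>. ((norm (\<phi> (X \<omega>)))\<^sup>2 + (norm (Y \<omega>))\<^sup>2) / 2)"
      using int_sq Y_L2 by simp
    show "inner (\<phi> (X \<omega>)) (Y \<omega>) \<le> ((norm (\<phi> (X \<omega>)))\<^sup>2 + (norm (Y \<omega>))\<^sup>2) / 2" for \<omega>
      by (rule inner_le_half_sq_sum)
  qed
  also have "\<dots> = ((\<integral>\<omega>. (norm (\<phi> (X \<omega>)))\<^sup>2 \<partial>M) + (\<integral>\<omega>. (norm (Y \<omega>))\<^sup>2 \<partial>M)) / 2"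
    using int_sq Y_L2 by simp
  finally show ?thesis by (simp add: field_simps)
qed

text \<open>In place of a conditional Jensen inequality: the truncations of f* have second moments
  bounded by E |Y|^2 (by orthogonality), and monotone convergence passes to f*.\<close>
lemma fstar_X_in_L2: "in_L2 M (\<lambda>\<omega>. fstar (X \<omega>))"
proof -
  define \<phi> where "\<phi> k x = (if norm (fstar x) \<le> real k then fstar x else 0)" for k x
  let ?f = "\<lambda>k \<omega>. (norm (\<phi> k (X \<omega>)))\<^sup>2"
  have [measurable]: "\<phi> k \<in> borel_measurable MX" for k unfolding \<phi>_def by measurable
  have int: "integrable M (?f k)" for k
    by (rule in_L2_bounded[of _ "real k", unfolded in_L2_def, THEN conjunct2])
      (auto simp: \<phi>_def)
  have le: "integral\<^sup>L M (?f k) \<le> (\<integral>\<omega>. (norm (Y \<omega>))\<^sup>2 \<partial>M)" for k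
    by (rule sq_integral_le_if_inner_fstar_eq[of "\<phi> k" "real k"])
      (auto simp: \<phi>_def power2_norm_eq_inner)
  have mono: "mono (\<lambda>k. ?f k \<omega>)" for \<omega>
    by (rule monoI) (auto simp: \<phi>_def)
  have "integrable M (\<lambda>\<omega>. (norm (fstar (X \<omega>)))\<^sup>2)"
  proof (rule integrable_monotone_convergence[OF int])
    show "(\<lambda>k. integral\<^sup>L M (?f k)) \<longlonglongrightarrow> (SUP k. integral\<^sup>L M (?f k))"
      using le mono by (intro LIMSEQ_incseq_SUP bdd_aboveI2 incseq_SucI Bochner_Integration.integral_mono)
        (auto simp: int mono_def)
    show "AE \<omega> in M. (\<lambda>k. ?f k \<omega>) \<longlonglongrightarrow> (norm (fstar (X \<omega>)))\<^sup>2"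
    proof (rule AE_I2)
      fix \<omega>
      obtain N :: nat where "norm (fstar (X \<omega>)) \<le> N" using real_arch_simple by blast
      then have "\<forall>k\<ge>N. ?f k \<omega> = (norm (fstar (X \<omega>)))\<^sup>2" by (auto simp: \<phi>_def)
      then show "(\<lambda>k. ?f k \<omega>) \<longlonglongrightarrow> (norm (fstar (X \<omega>)))\<^sup>2"
        by (intro tendsto_eventually) (auto simp: eventually_sequentially)
    qed
  qed (use mono in auto)
  then show ?thesis unfolding in_L2_def by simp
qed

lemma fstar_in_L2_distr: "in_L2 (distr M MX X) fstar"
  using fstar_X_in_L2 by (simp add: in_L2_def integrable_distr_eq)

lemma risk_decomposition:
  assumes g [measurable]: "g \<in> borel_measurable MX" and g_L2: "in_L2 M (\<lambda>\<omega>. g (X \<omega>))"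
  shows "risk M X Y g = (\<integral>\<omega>. (norm (g (X \<omega>) - fstar (X \<omega>)))\<^sup>2 \<partial>M) + risk M X Y fstar"
proof -
  let ?d = "\<lambda>\<omega>. g (X \<omega>) - fstar (X \<omega>)" and ?R = "\<lambda>\<omega>. Y \<omega> - fstar (X \<omega>)"
  have d_L2: "in_L2 M ?d" by (rule in_L2_diff[OF g_L2 fstar_X_in_L2])
  have R_L2: "in_L2 M ?R" by (rule in_L2_diff[OF Y_in_L2 fstar_X_in_L2])
  have orth: "(\<integral>\<omega>. inner (?d \<omega>) (?R \<omega>) \<partial>M) = 0"
    using in_L2_norm_mult_integrable[OF d_L2 R_L2] by (intro residual_orthogonal) simp_all
  have "(norm (g (X \<omega>) - Y \<omega>))\<^sup>2 = (norm (?d \<omega>))\<^sup>2 - 2 * inner (?d \<omega>) (?R \<omega>) + (norm (?R \<omega>))\<^sup>2"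
    for \<omega>
    using dot_norm_neg[of "?d \<omega>" "?R \<omega>"] by (simp add: algebra_simps)
  moreover have "(norm (fstar (X \<omega>) - Y \<omega>))\<^sup>2 = (norm (?R \<omega>))\<^sup>2" for \<omega>
    by (simp add: norm_minus_commute)
  ultimately show ?thesis
    using d_L2 R_L2 in_L2_inner_integrable[OF d_L2 R_L2] orth unfolding risk_def in_L2_def by simp
qed

end

section \<open>Regularised least squares in the RKHS\<close>

locale rkhs_model = cond_exp_model M MX X Y fstar
  for M :: "'a measure" and MX :: "'x measure" and X :: "'a \<Rightarrow> 'x"
    and Y :: "'a \<Rightarrow> 'y::{real_inner, complete_space, second_countable_topology}"
    and fstar :: "'x \<Rightarrow> 'y" +
  fixes emb :: "'h::{real_inner, complete_space, second_countable_topology} \<Rightarrow> 'x \<Rightarrow> 'y"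
    and \<kappa> :: real
  assumes eval_bl: "\<And>x. bounded_linear (\<lambda>h. emb h x)"
    and emb_meas [measurable]: "\<And>h. emb h \<in> borel_measurable MX"
    and eval_bound: "\<And>h x. norm (emb h x) \<le> \<kappa> * norm h"
    and \<kappa>_nonneg: "0 \<le> \<kappa>"
begin

lemma emb_add: "emb (u + v) x = emb u x + emb v x"
  using linear_add[OF bounded_linear.linear[OF eval_bl]] .

lemma emb_diff: "emb (u - v) x = emb u x - emb v x"
  using linear_diff[OF bounded_linear.linear[OF eval_bl]] .

lemma emb_scaleR: "emb (c *\<^sub>R u) x = c *\<^sub>R emb u x"
  using linear_scale[OF bounded_linear.linear[OF eval_bl]] .

lemma emb_zero: "emb 0 x = 0"
  using linear_0[OF bounded_linear.linear[OF eval_bl]] .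

lemma emb_X_in_L2: "in_L2 M (\<lambda>\<omega>. emb h (X \<omega>))"
  by (rule in_L2_bounded[of _ "\<kappa> * norm h"]) (simp_all add: eval_bound)

lemma integrable_inner_emb: "integrable M (\<lambda>\<omega>. inner (emb u (X \<omega>)) (emb v (X \<omega>)))"
  by (rule in_L2_inner_integrable[OF emb_X_in_L2 emb_X_in_L2])

lemma integrable_inner_Y_emb: "integrable M (\<lambda>\<omega>. inner (Y \<omega>) (emb v (X \<omega>)))"
  by (rule in_L2_inner_integrable[OF Y_in_L2 emb_X_in_L2])

lemma abs_inner_emb_le: "\<bar>inner (emb u x) (emb v x)\<bar> \<le> \<kappa>\<^sup>2 * (norm u * norm v)"
proof -
  have "\<bar>inner (emb u x) (emb v x)\<bar> \<le> norm (emb u x) * norm (emb v x)" by (rule Cauchy_Schwarz_ineq2)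
  also have "\<dots> \<le> (\<kappa> * norm u) * (\<kappa> * norm v)"
    using eval_bound \<kappa>_nonneg by (intro mult_mono) auto
  finally show ?thesis by (simp add: power2_eq_square algebra_simps)
qed

definition gram :: "'h \<Rightarrow> 'h \<Rightarrow> real" where
  "gram u v = (\<integral>\<omega>. inner (emb u (X \<omega>)) (emb v (X \<omega>)) \<partial>M)"

definition cross_moment :: "'h \<Rightarrow> real" where
  "cross_moment v = (\<integral>\<omega>. inner (Y \<omega>) (emb v (X \<omega>)) \<partial>M)"

lemma gram_sym: "gram u v = gram v u"
  unfolding gram_def by (simp add: inner_commute)

lemma gram_nonneg: "0 \<le> gram u u"
  unfolding gram_def by simp

lemma bounded_bilinear_gram: "bounded_bilinear gram"
proof
  show "\<exists>K. \<forall>u v. norm (gram u v) \<le> norm u * norm v * K"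
  proof (intro exI allI)
    fix u v
    have "\<bar>gram u v\<bar> \<le> (\<integral>\<omega>. \<bar>inner (emb u (X \<omega>)) (emb v (X \<omega>))\<bar> \<partial>M)"
      unfolding gram_def by (rule integral_abs_bound)
    also have "\<dots> \<le> (\<integral>\<omega>. \<kappa>\<^sup>2 * (norm u * norm v) \<partial>M)"
      using integrable_inner_emb by (intro Bochner_Integration.integral_mono abs_inner_emb_le) auto
    finally show "norm (gram u v) \<le> norm u * norm v * \<kappa>\<^sup>2" by (simp add: prob_space mult.commute)
  qed
qed (simp_all add: gram_def emb_add emb_scaleR inner_add_left inner_add_right integrable_inner_emb)

lemma bounded_linear_cross_moment: "bounded_linear cross_moment"
proof
  show "\<exists>K. \<forall>v. norm (cross_moment v) \<le> norm v * K"
  proof (intro exI allI)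
    fix v
    have "\<bar>cross_moment v\<bar> \<le> (\<integral>\<omega>. \<bar>inner (Y \<omega>) (emb v (X \<omega>))\<bar> \<partial>M)"
      unfolding cross_moment_def by (rule integral_abs_bound)
    also have "\<dots> \<le> (\<integral>\<omega>. norm (Y \<omega>) * (\<kappa> * norm v) \<partial>M)"
    proof (rule Bochner_Integration.integral_mono)
      show "integrable M (\<lambda>\<omega>. norm (Y \<omega>) * (\<kappa> * norm v))"
        using in_L2_integrable_norm[OF Y_in_L2] by simp
      show "\<bar>inner (Y \<omega>) (emb v (X \<omega>))\<bar> \<le> norm (Y \<omega>) * (\<kappa> * norm v)" for \<omega>
        using Cauchy_Schwarz_ineq2 eval_bound by (rule order_trans[OF _ mult_left_mono]) simp
    qed (use integrable_inner_Y_emb in simp)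
    finally show "norm (cross_moment v) \<le> norm v * (\<kappa> * (\<integral>\<omega>. norm (Y \<omega>) \<partial>M))"
      by (simp add: algebra_simps)
  qed
qed (simp_all add: cross_moment_def emb_add emb_scaleR inner_add_right integrable_inner_Y_emb)

lemma risk_expansion:
  "risk M X Y (emb h) = gram h h - 2 * cross_moment h + (\<integral>\<omega>. (norm (Y \<omega>))\<^sup>2 \<partial>M)"
proof -
  have "(norm (emb h (X \<omega>) - Y \<omega>))\<^sup>2
      = inner (emb h (X \<omega>)) (emb h (X \<omega>)) - 2 * inner (Y \<omega>) (emb h (X \<omega>)) + (norm (Y \<omega>))\<^sup>2" for \<omega>
    by (simp add: power2_norm_eq_inner inner_diff_left inner_diff_right inner_commute)
  then show ?thesis
    unfolding risk_def gram_def cross_moment_def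
    using integrable_inner_emb integrable_inner_Y_emb Y_L2 by simp
qed

definition reg_form :: "real \<Rightarrow> 'h \<Rightarrow> 'h \<Rightarrow> real" where
  "reg_form lam u v = gram u v + lam * inner u v"

lemma bounded_bilinear_reg_form: "bounded_bilinear (reg_form lam)"
  unfolding reg_form_def[abs_def]
  by (rule bounded_bilinear_add_scaled[OF bounded_bilinear_gram bounded_bilinear_inner])

lemma reg_form_sym: "reg_form lam u v = reg_form lam v u"
  unfolding reg_form_def by (simp add: gram_sym inner_commute)

lemma reg_form_coercive: "lam * (norm u)\<^sup>2 \<le> reg_form lam u u"
  unfolding reg_form_def using gram_nonneg[of u] by (simp add: power2_norm_eq_inner)

definition reg_minimizer :: "real \<Rightarrow> 'h" where
  "reg_minimizer lam = (SOME u. \<forall>v. reg_form lam u v = cross_moment v)"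

lemma reg_minimizer_normal_eq:
  assumes "0 < lam"
  shows "reg_form lam (reg_minimizer lam) v = cross_moment v"
proof -
  have "\<exists>u. \<forall>v. reg_form lam u v = cross_moment v"
    by (rule lax_milgram_symmetric[OF bounded_bilinear_reg_form reg_form_sym assms
          reg_form_coercive bounded_linear_cross_moment])
  then have "\<forall>v. reg_form lam (reg_minimizer lam) v = cross_moment v"
    unfolding reg_minimizer_def by (rule someI_ex)
  then show ?thesis ..
qed

lemma reg_risk_at_reg_minimizer:
  assumes "0 < lam"
  shows "risk M X Y (emb h) + lam * (norm h)\<^sup>2 = risk M X Y (emb (reg_minimizer lam))
           + lam * (norm (reg_minimizer lam))\<^sup>2 + reg_form lam (h - reg_minimizer lam) (h - reg_minimizer lam)"
proof -
  have reg_risk_eq: "risk M X Y (emb v) + lam * (norm v)\<^sup>2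
      = reg_form lam v v - 2 * cross_moment v + (\<integral>\<omega>. (norm (Y \<omega>))\<^sup>2 \<partial>M)" for v
    by (simp add: risk_expansion reg_form_def power2_norm_eq_inner)
  show ?thesis
    using quadratic_functional_at_critical_point[OF
        bounded_bilinear_imp_bilinear[OF bounded_bilinear_reg_form] reg_form_sym
        bounded_linear.linear[OF bounded_linear_cross_moment] reg_minimizer_normal_eq[OF assms], of h]
      reg_risk_eq[of h] reg_risk_eq[of "reg_minimizer lam"]
    by linarith
qed

definition excess_risk :: "'h \<Rightarrow> real" where
  "excess_risk h = (\<integral>\<omega>. (norm (emb h (X \<omega>) - fstar (X \<omega>)))\<^sup>2 \<partial>M)"

lemma excess_risk_nonneg: "0 \<le> excess_risk h"
  unfolding excess_risk_def by simp

lemma risk_emb_decomposition: "risk M X Y (emb h) = excess_risk h + risk M X Y fstar"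
  unfolding excess_risk_def by (rule risk_decomposition[OF emb_meas emb_X_in_L2])

lemma excess_risk_reg_minimizer_le:
  assumes "0 < lam"
  shows "excess_risk (reg_minimizer lam) \<le> excess_risk h + lam * (norm h)\<^sup>2"
proof -
  have "0 \<le> lam * (norm (reg_minimizer lam))\<^sup>2 + reg_form lam (h - reg_minimizer lam) (h - reg_minimizer lam)"
    using assms reg_form_coercive[of lam "h - reg_minimizer lam"]
    by (smt (verit) mult_nonneg_nonneg zero_le_power2)
  then show ?thesis
    using reg_risk_at_reg_minimizer[OF assms, of h] by (simp add: risk_emb_decomposition)
qed

lemma excess_risk_reg_minimizer_tendsto_0:
  assumes approx: "\<And>e. 0 < e \<Longrightarrow> \<exists>h. excess_risk h < e"
    and lam_pos: "\<And>n. 0 < lam n" and lam_lim: "lam \<longlonglongrightarrow> 0"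
  shows "(\<lambda>n. excess_risk (reg_minimizer (lam n))) \<longlonglongrightarrow> 0"
proof (rule order_tendstoI)
  fix e :: real assume "0 < e"
  then obtain h where h: "excess_risk h < e / 2" using approx[of "e / 2"] by auto
  have "(\<lambda>n. lam n * (norm h)\<^sup>2) \<longlonglongrightarrow> 0 * (norm h)\<^sup>2" by (intro tendsto_intros lam_lim)
  then have "\<forall>\<^sub>F n in sequentially. lam n * (norm h)\<^sup>2 < e / 2"
    using order_tendstoD(2)[of _ "0 * (norm h)\<^sup>2" sequentially "e / 2"] \<open>0 < e\<close> by simp
  then show "\<forall>\<^sub>F n in sequentially. excess_risk (reg_minimizer (lam n)) < e"
  proof (rule eventually_mono)
    fix n assume "lam n * (norm h)\<^sup>2 < e / 2"
    then show "excess_risk (reg_minimizer (lam n)) < e"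
      using excess_risk_reg_minimizer_le[OF lam_pos, of n h] h by linarith
  qed
qed (use excess_risk_nonneg less_le_trans in \<open>blast intro: always_eventually\<close>)

lemma continuous_on_excess_risk: "continuous_on UNIV excess_risk"
proof -
  have "excess_risk h = gram h h - 2 * cross_moment h + (\<integral>\<omega>. (norm (Y \<omega>))\<^sup>2 \<partial>M) - risk M X Y fstar"
    for h
    using risk_emb_decomposition[of h] risk_expansion[of h] by simp
  then show ?thesis
    by (simp add: continuous_intros bounded_bilinear.continuous_on[OF bounded_bilinear_gram]
        bounded_linear.continuous_on[OF bounded_linear_cross_moment])
qed

lemma excess_risk_le_dist:
  "excess_risk h \<le> 2 * \<kappa>\<^sup>2 * (norm (h - f))\<^sup>2 + 2 * excess_risk f"
proof -
  have "(norm (emb h (X \<omega>) - fstar (X \<omega>)))\<^sup>2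
      \<le> 2 * \<kappa>\<^sup>2 * (norm (h - f))\<^sup>2 + 2 * (norm (emb f (X \<omega>) - fstar (X \<omega>)))\<^sup>2" for \<omega>
  proof -
    have "norm (emb h (X \<omega>) - fstar (X \<omega>)) \<le> \<kappa> * norm (h - f) + norm (emb f (X \<omega>) - fstar (X \<omega>))"
      using norm_triangle_ineq[of "emb (h - f) (X \<omega>)" "emb f (X \<omega>) - fstar (X \<omega>)"]
        eval_bound[of "h - f" "X \<omega>"]
      by (simp add: emb_diff)
    then have "(norm (emb h (X \<omega>) - fstar (X \<omega>)))\<^sup>2
        \<le> (\<kappa> * norm (h - f) + norm (emb f (X \<omega>) - fstar (X \<omega>)))\<^sup>2"
      by (simp add: power_mono)
    also have "\<dots> \<le> 2 * (\<kappa> * norm (h - f))\<^sup>2 + 2 * (norm (emb f (X \<omega>) - fstar (X \<omega>)))\<^sup>2"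
      using sum_squares_bound[of "\<kappa> * norm (h - f)" "norm (emb f (X \<omega>) - fstar (X \<omega>))"]
      by (simp add: power2_sum)
    finally show ?thesis by (simp add: power_mult_distrib)
  qed
  moreover have int: "integrable M (\<lambda>\<omega>. (norm (emb g (X \<omega>) - fstar (X \<omega>)))\<^sup>2)" for g
    using in_L2_diff[OF emb_X_in_L2 fstar_X_in_L2] by (simp add: in_L2_def)
  ultimately have "excess_risk h
      \<le> (\<integral>\<omega>. 2 * \<kappa>\<^sup>2 * (norm (h - f))\<^sup>2 + 2 * (norm (emb f (X \<omega>) - fstar (X \<omega>)))\<^sup>2 \<partial>M)"
    unfolding excess_risk_def by (intro Bochner_Integration.integral_mono) simp_all
  also have "\<dots> = 2 * \<kappa>\<^sup>2 * (norm (h - f))\<^sup>2 + 2 * excess_risk f"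
    using int by (simp add: excess_risk_def prob_space)
  finally show ?thesis .
qed

text \<open>Minus half the gradient, at the population minimiser, of the regularised loss of one
  sample (x, y).\<close>
definition sample_gradient :: "real \<Rightarrow> 'x \<times> 'y \<Rightarrow> 'h" where
  "sample_gradient lam z = eval_adj emb (fst z) (snd z - emb (reg_minimizer lam) (fst z))
     - lam *\<^sub>R reg_minimizer lam"

lemma inner_sample_gradient:
  "inner (sample_gradient lam (x, y)) g
     = inner (y - emb (reg_minimizer lam) x) (emb g x) - lam * inner (reg_minimizer lam) g"
  unfolding sample_gradient_def by (simp add: inner_diff_left eval_adj_inner[OF eval_bl])

lemma sample_gradient_meas [measurable]: "sample_gradient lam \<in> borel_measurable (MX \<Otimes>\<^sub>M borel)"
proof (rule borel_measurable_weakly_measurable)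
  fix g
  have "(\<lambda>z. inner (sample_gradient lam z) g)
      = (\<lambda>z. inner (snd z - emb (reg_minimizer lam) (fst z)) (emb g (fst z)) - lam * inner (reg_minimizer lam) g)"
  proof
    fix z :: "'x \<times> 'y"
    show "inner (sample_gradient lam z) g
        = inner (snd z - emb (reg_minimizer lam) (fst z)) (emb g (fst z)) - lam * inner (reg_minimizer lam) g"
      using inner_sample_gradient[of lam "fst z" "snd z" g] by simp
  qed
  also have "\<dots> \<in> borel_measurable (MX \<Otimes>\<^sub>M borel)" by measurable
  finally show "(\<lambda>z. inner (sample_gradient lam z) g) \<in> borel_measurable (MX \<Otimes>\<^sub>M borel)" .
qed

lemma sample_gradient_mean_zero:
  assumes "0 < lam"
  shows "(\<integral>\<omega>. inner (sample_gradient lam (X \<omega>, Y \<omega>)) g \<partial>M) = 0"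
proof -
  have "(\<integral>\<omega>. inner (sample_gradient lam (X \<omega>, Y \<omega>)) g \<partial>M) = cross_moment g - reg_form lam (reg_minimizer lam) g"
    using integrable_inner_Y_emb integrable_inner_emb
    by (simp add: inner_sample_gradient inner_diff_left cross_moment_def reg_form_def gram_def prob_space)
  then show ?thesis using reg_minimizer_normal_eq[OF assms] by simp
qed

lemma norm_sample_gradient_sq_le:
  assumes "0 \<le> lam"
  shows "(norm (sample_gradient lam (x, y)))\<^sup>2
           \<le> 2 * \<kappa>\<^sup>2 * (norm (emb (reg_minimizer lam) x - y))\<^sup>2 + 2 * lam\<^sup>2 * (norm (reg_minimizer lam))\<^sup>2"
proof -
  let ?f = "reg_minimizer lam" and ?a = "eval_adj emb x (y - emb (reg_minimizer lam) x)"
  have "norm (sample_gradient lam (x, y)) \<le> norm ?a + norm (lam *\<^sub>R ?f)"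
    unfolding sample_gradient_def fst_conv snd_conv by (rule norm_triangle_ineq4)
  also have "norm ?a \<le> \<kappa> * norm (y - emb ?f x)"
    by (rule norm_eval_adj_le[where emb = emb and x = x, OF eval_bl eval_bound \<kappa>_nonneg])
  finally have "norm (sample_gradient lam (x, y)) \<le> \<kappa> * norm (emb ?f x - y) + lam * norm ?f"
    using assms by (simp add: norm_minus_commute)
  then have "(norm (sample_gradient lam (x, y)))\<^sup>2 \<le> (\<kappa> * norm (emb ?f x - y) + lam * norm ?f)\<^sup>2"
    by (simp add: power_mono)
  also have "\<dots> \<le> 2 * \<kappa>\<^sup>2 * (norm (emb ?f x - y))\<^sup>2 + 2 * lam\<^sup>2 * (norm ?f)\<^sup>2"
    using sum_squares_bound[of "\<kappa> * norm (emb ?f x - y)" "lam * norm ?f"]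
    by (simp add: power2_sum power_mult_distrib)
  finally show ?thesis .
qed

lemma reg_risk_reg_minimizer_le:
  assumes "0 < lam"
  shows "risk M X Y (emb (reg_minimizer lam)) + lam * (norm (reg_minimizer lam))\<^sup>2
           \<le> (\<integral>\<omega>. (norm (Y \<omega>))\<^sup>2 \<partial>M)"
  using reg_risk_at_reg_minimizer[OF assms, of 0] reg_form_coercive[of lam "- reg_minimizer lam"] assms
  by (simp add: risk_def emb_zero) (smt (verit) mult_nonneg_nonneg zero_le_power2)

lemma sample_gradient_in_L2:
  assumes "0 < lam"
  shows "in_L2 M (\<lambda>\<omega>. sample_gradient lam (X \<omega>, Y \<omega>))"
    and "(\<integral>\<omega>. (norm (sample_gradient lam (X \<omega>, Y \<omega>)))\<^sup>2 \<partial>M)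
           \<le> 2 * (\<kappa>\<^sup>2 + lam) * (\<integral>\<omega>. (norm (Y \<omega>))\<^sup>2 \<partial>M)"
proof -
  let ?f = "reg_minimizer lam" and ?EY2 = "\<integral>\<omega>. (norm (Y \<omega>))\<^sup>2 \<partial>M"
  let ?b = "\<lambda>\<omega>. 2 * \<kappa>\<^sup>2 * (norm (emb ?f (X \<omega>) - Y \<omega>))\<^sup>2 + 2 * lam\<^sup>2 * (norm ?f)\<^sup>2"
  have bound: "(norm (sample_gradient lam (X \<omega>, Y \<omega>)))\<^sup>2 \<le> ?b \<omega>" for \<omega>
    using assms by (intro norm_sample_gradient_sq_le) simp
  have int_risk: "integrable M (\<lambda>\<omega>. (norm (emb ?f (X \<omega>) - Y \<omega>))\<^sup>2)"
    using in_L2_diff[OF emb_X_in_L2 Y_in_L2] by (simp add: in_L2_def)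
  show L2: "in_L2 M (\<lambda>\<omega>. sample_gradient lam (X \<omega>, Y \<omega>))"
    unfolding in_L2_def
  proof
    show "integrable M (\<lambda>\<omega>. (norm (sample_gradient lam (X \<omega>, Y \<omega>)))\<^sup>2)"
      by (rule Bochner_Integration.integrable_bound[of _ ?b])
        (use int_risk in \<open>auto intro!: AE_I2 order_trans[OF bound]\<close>)
  qed simp
  have "(\<integral>\<omega>. (norm (sample_gradient lam (X \<omega>, Y \<omega>)))\<^sup>2 \<partial>M) \<le> integral\<^sup>L M ?b"
    using L2 int_risk bound by (intro Bochner_Integration.integral_mono) (simp_all add: in_L2_def)
  also have "\<dots> = 2 * \<kappa>\<^sup>2 * risk M X Y (emb ?f) + 2 * lam * (lam * (norm ?f)\<^sup>2)"
    using int_risk by (simp add: risk_def prob_space power2_eq_square)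
  also have "\<dots> \<le> 2 * \<kappa>\<^sup>2 * ?EY2 + 2 * lam * ?EY2"
  proof -
    have "0 \<le> risk M X Y (emb ?f)" "0 \<le> lam * (norm ?f)\<^sup>2"
      using assms by (simp_all add: risk_def)
    then have "risk M X Y (emb ?f) \<le> ?EY2" "lam * (norm ?f)\<^sup>2 \<le> ?EY2"
      using reg_risk_reg_minimizer_le[OF assms] by linarith+
    then show ?thesis using assms by (intro add_mono mult_left_mono) auto
  qed
  finally show "(\<integral>\<omega>. (norm (sample_gradient lam (X \<omega>, Y \<omega>)))\<^sup>2 \<partial>M) \<le> 2 * (\<kappa>\<^sup>2 + lam) * ?EY2"
    by (simp add: algebra_simps)
qed

definition emp_form :: "(nat \<Rightarrow> 'x) \<Rightarrow> nat \<Rightarrow> real \<Rightarrow> 'h \<Rightarrow> 'h \<Rightarrow> real" where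
  "emp_form xs n lam u v = (1 / real n) * (\<Sum>i<n. inner (emb u (xs i)) (emb v (xs i))) + lam * inner u v"

definition emp_cross_moment :: "(nat \<Rightarrow> 'x) \<Rightarrow> (nat \<Rightarrow> 'y) \<Rightarrow> nat \<Rightarrow> 'h \<Rightarrow> real" where
  "emp_cross_moment xs ys n v = (1 / real n) * (\<Sum>i<n. inner (ys i) (emb v (xs i)))"

lemma reg_emp_risk_eq:
  "reg_emp_risk emb xs ys n lam h = emp_form xs n lam h h - 2 * emp_cross_moment xs ys n h
     + (1 / real n) * (\<Sum>i<n. (norm (ys i))\<^sup>2)"
proof -
  have "(norm (emb h (xs i) - ys i))\<^sup>2
      = inner (emb h (xs i)) (emb h (xs i)) - 2 * inner (ys i) (emb h (xs i)) + (norm (ys i))\<^sup>2" for i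
    by (simp add: power2_norm_eq_inner inner_diff_left inner_diff_right inner_commute)
  then show ?thesis
    unfolding reg_emp_risk_def emp_form_def emp_cross_moment_def
    by (simp add: sum.distrib sum_subtractf sum_distrib_left power2_norm_eq_inner algebra_simps)
qed

lemma bilinear_emp_form: "bilinear (emp_form xs n lam)"
  unfolding bilinear_def linear_iff emp_form_def
  by (simp add: emb_add emb_scaleR inner_add_left inner_add_right sum.distrib sum_distrib_left
      algebra_simps)

lemma emp_form_sym: "emp_form xs n lam u v = emp_form xs n lam v u"
  unfolding emp_form_def by (simp add: inner_commute)

lemma emp_form_lower: "0 \<le> lam \<Longrightarrow> lam * (norm d)\<^sup>2 \<le> emp_form xs n lam d d"
  unfolding emp_form_def by (simp add: sum_nonneg power2_norm_eq_inner)

lemma linear_emp_cross_moment: "linear (emp_cross_moment xs ys n)"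
  unfolding linear_iff emp_cross_moment_def
  by (simp add: emb_add emb_scaleR inner_add_right sum.distrib sum_distrib_left algebra_simps)

context
  fixes xs :: "nat \<Rightarrow> 'x" and ys :: "nat \<Rightarrow> 'y" and n :: nat and lam :: real and F :: 'h
  assumes lam: "0 < lam"
    and F_min: "\<And>g. reg_emp_risk emb xs ys n lam F \<le> reg_emp_risk emb xs ys n lam g"
begin

lemma emp_minimizer_normal_eq: "emp_form xs n lam F d = emp_cross_moment xs ys n d"
proof -
  have "\<forall>g. emp_form xs n lam F F - 2 * emp_cross_moment xs ys n F
      \<le> emp_form xs n lam g g - 2 * emp_cross_moment xs ys n g"
    using F_min by (simp add: reg_emp_risk_eq)
  then show ?thesis
    using quadratic_functional_minimizer_iff[OF bilinear_emp_form emp_form_sym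
        linear_emp_cross_moment[of xs ys n] order_trans[OF _ emp_form_lower], of lam xs n F] lam
    by auto
qed

lemma reg_emp_risk_at_minimizer:
  "reg_emp_risk emb xs ys n lam h = reg_emp_risk emb xs ys n lam F + emp_form xs n lam (h - F) (h - F)"
  using quadratic_functional_at_critical_point[OF bilinear_emp_form emp_form_sym
      linear_emp_cross_moment emp_minimizer_normal_eq, of h]
  by (simp add: reg_emp_risk_eq)

lemma emp_minimizer_near_reg_minimizer:
  assumes "1 \<le> n"
  shows "norm (F - reg_minimizer lam)
           \<le> norm ((1 / real n) *\<^sub>R (\<Sum>i<n. sample_gradient lam (xs i, ys i))) / lam"
proof -
  let ?f = "reg_minimizer lam" and ?v = "(1 / real n) *\<^sub>R (\<Sum>i<n. sample_gradient lam (xs i, ys i))"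
  let ?d = "F - ?f"
  have "emp_form xs n lam ?d ?d = emp_cross_moment xs ys n ?d - emp_form xs n lam ?f ?d"
    using emp_minimizer_normal_eq[of ?d] by (simp add: bilinear_lsub[OF bilinear_emp_form])
  also have "\<dots> = inner ?v ?d"
  proof -
    have "inner ?v ?d = (1 / real n) * (\<Sum>i<n. inner (ys i) (emb ?d (xs i)))
        - (1 / real n) * (\<Sum>i<n. inner (emb ?f (xs i)) (emb ?d (xs i)))
        - (1 / real n) * (real n * (lam * inner ?f ?d))"
      by (simp add: inner_sum_left inner_sample_gradient inner_diff_left sum_subtractf
          right_diff_distrib)
    then show ?thesis using assms by (simp add: emp_cross_moment_def emp_form_def)
  qed
  also have "\<dots> \<le> norm ?v * norm ?d" by (rule norm_cauchy_schwarz)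
  finally have "lam * (norm ?d)\<^sup>2 \<le> norm ?v * norm ?d"
    using emp_form_lower[of lam ?d xs n] lam by linarith
  then have "(norm ?d)\<^sup>2 \<le> norm ?d * (norm ?v / lam)"
    using lam assms by (simp add: field_simps power2_eq_square)
  then show ?thesis by (rule nonneg_le_of_square_le_mult) (use lam in simp_all)
qed

end

lemma continuous_on_reg_emp_risk: "continuous_on UNIV (reg_emp_risk emb xs ys n lam)"
  unfolding reg_emp_risk_def[abs_def]
  by (intro continuous_intros linear_continuous_on eval_bl)

end

section \<open>Concentration for i.i.d. samples\<close>

locale iid_sample = rkhs_model M MX X Y fstar emb \<kappa>
  for M :: "'a measure" and MX :: "'x measure" and X :: "'a \<Rightarrow> 'x"
    and Y :: "'a \<Rightarrow> 'y::{real_inner, complete_space, second_countable_topology}"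
    and fstar :: "'x \<Rightarrow> 'y"
    and emb :: "'h::{real_inner, complete_space, second_countable_topology} \<Rightarrow> 'x \<Rightarrow> 'y"
    and \<kappa> :: real +
  fixes Xs :: "nat \<Rightarrow> 'a \<Rightarrow> 'x" and Ys :: "nat \<Rightarrow> 'a \<Rightarrow> 'y"
  assumes Xs_meas [measurable]: "\<And>i. Xs i \<in> measurable M MX"
    and Ys_meas [measurable]: "\<And>i. Ys i \<in> borel_measurable M"
    and indep: "indep_vars (\<lambda>_. MX \<Otimes>\<^sub>M borel) (\<lambda>i \<omega>. (Xs i \<omega>, Ys i \<omega>)) UNIV"
    and ident: "\<And>i. distr M (MX \<Otimes>\<^sub>M borel) (\<lambda>\<omega>. (Xs i \<omega>, Ys i \<omega>))
                   = distr M (MX \<Otimes>\<^sub>M borel) (\<lambda>\<omega>. (X \<omega>, Y \<omega>))"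
begin

lemma integral_sample_eq:
  fixes \<phi> :: "'x \<times> 'y \<Rightarrow> real"
  assumes [measurable]: "\<phi> \<in> borel_measurable (MX \<Otimes>\<^sub>M borel)"
  shows "(\<integral>\<omega>. \<phi> (Xs i \<omega>, Ys i \<omega>) \<partial>M) = (\<integral>\<omega>. \<phi> (X \<omega>, Y \<omega>) \<partial>M)"
    and "integrable M (\<lambda>\<omega>. \<phi> (Xs i \<omega>, Ys i \<omega>)) \<longleftrightarrow> integrable M (\<lambda>\<omega>. \<phi> (X \<omega>, Y \<omega>))"
  using integral_distr[of "\<lambda>\<omega>. (Xs i \<omega>, Ys i \<omega>)" M "MX \<Otimes>\<^sub>M borel" \<phi>]
    integral_distr[of "\<lambda>\<omega>. (X \<omega>, Y \<omega>)" M "MX \<Otimes>\<^sub>M borel" \<phi>]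
    integrable_distr_eq[of "\<lambda>\<omega>. (Xs i \<omega>, Ys i \<omega>)" M "MX \<Otimes>\<^sub>M borel" \<phi>]
    integrable_distr_eq[of "\<lambda>\<omega>. (X \<omega>, Y \<omega>)" M "MX \<Otimes>\<^sub>M borel" \<phi>]
  by (simp_all add: ident)

lemma sample_gradient_sample_in_L2:
  assumes "0 < lam"
  shows "in_L2 M (\<lambda>\<omega>. sample_gradient lam (Xs i \<omega>, Ys i \<omega>))"
  using sample_gradient_in_L2(1)[OF assms] integral_sample_eq(2)[of "\<lambda>z. (norm (sample_gradient lam z))\<^sup>2"]
  by (simp add: in_L2_def)

lemma indep_samples:
  assumes "i \<noteq> j"
  shows "indep_var (MX \<Otimes>\<^sub>M borel) (\<lambda>\<omega>. (Xs i \<omega>, Ys i \<omega>)) (MX \<Otimes>\<^sub>M borel) (\<lambda>\<omega>. (Xs j \<omega>, Ys j \<omega>))"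
proof -
  have "indep_var (MX \<Otimes>\<^sub>M borel) ((\<lambda>f. f i) \<circ> (\<lambda>\<omega>. restrict (\<lambda>k. (Xs k \<omega>, Ys k \<omega>)) {i}))
      (MX \<Otimes>\<^sub>M borel) ((\<lambda>f. f j) \<circ> (\<lambda>\<omega>. restrict (\<lambda>k. (Xs k \<omega>, Ys k \<omega>)) {j}))"
    using assms by (intro indep_var_compose[OF indep_var_restrict[OF indep]]) auto
  then show ?thesis by (simp add: comp_def)
qed

lemma inner_sample_gradients_integral_0:
  assumes "i \<noteq> j" "0 < lam"
  shows "(\<integral>\<omega>. inner (sample_gradient lam (Xs i \<omega>, Ys i \<omega>)) (sample_gradient lam (Xs j \<omega>, Ys j \<omega>)) \<partial>M) = 0"
proof -
  let ?N = "MX \<Otimes>\<^sub>M (borel :: 'y measure)"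
  let ?P = "distr M ?N (\<lambda>\<omega>. (X \<omega>, Y \<omega>))"
  let ?f = "\<lambda>(z, z'). inner (sample_gradient lam z) (sample_gradient lam z')"
  interpret P: prob_space ?P by (rule prob_space_distr) simp
  interpret PP: pair_prob_space ?P ?P ..
  have joint: "distr M (?N \<Otimes>\<^sub>M ?N) (\<lambda>\<omega>. ((Xs i \<omega>, Ys i \<omega>), (Xs j \<omega>, Ys j \<omega>))) = ?P \<Otimes>\<^sub>M ?P"
    using indep_samples[OF assms(1)] unfolding indep_var_distribution_eq by (simp add: ident)
  have "integrable M (\<lambda>\<omega>. ?f ((Xs i \<omega>, Ys i \<omega>), (Xs j \<omega>, Ys j \<omega>)))"
    using in_L2_inner_integrable[OF sample_gradient_sample_in_L2 sample_gradient_sample_in_L2] assms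
    by simp
  then have int: "integrable (?P \<Otimes>\<^sub>M ?P) ?f"
    by (subst joint[symmetric], subst integrable_distr_eq) simp_all
  have "(\<integral>\<omega>. ?f ((Xs i \<omega>, Ys i \<omega>), (Xs j \<omega>, Ys j \<omega>)) \<partial>M) = integral\<^sup>L (?P \<Otimes>\<^sub>M ?P) ?f"
    by (subst joint[symmetric], subst integral_distr) simp_all
  also have "\<dots> = (\<integral>z. (\<integral>z'. ?f (z, z') \<partial>?P) \<partial>?P)"
    by (rule PP.integral_fst'[OF int, symmetric])
  also have "\<dots> = 0"
    using sample_gradient_mean_zero[OF assms(2)] by (simp add: integral_distr inner_commute)
  finally show ?thesis by simp
qed

definition mean_gradient :: "real \<Rightarrow> nat \<Rightarrow> 'a \<Rightarrow> 'h" where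
  "mean_gradient lam n \<omega> = (1 / real n) *\<^sub>R (\<Sum>i<n. sample_gradient lam (Xs i \<omega>, Ys i \<omega>))"

lemma mean_gradient_meas [measurable]: "mean_gradient lam n \<in> borel_measurable M"
  unfolding mean_gradient_def by measurable

lemma mean_gradient_variance:
  assumes lam: "0 < lam" and n: "1 \<le> n"
  shows "integrable M (\<lambda>\<omega>. (norm (mean_gradient lam n \<omega>))\<^sup>2)"
    and "(\<integral>\<omega>. (norm (mean_gradient lam n \<omega>))\<^sup>2 \<partial>M)
           \<le> 2 * (\<kappa>\<^sup>2 + lam) * (\<integral>\<omega>. (norm (Y \<omega>))\<^sup>2 \<partial>M) / real n"
proof -
  let ?\<psi> = "\<lambda>i \<omega>. sample_gradient lam (Xs i \<omega>, Ys i \<omega>)"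
  have sq: "(norm (mean_gradient lam n \<omega>))\<^sup>2 = (1 / real n)\<^sup>2 * (\<Sum>i<n. \<Sum>j<n. inner (?\<psi> j \<omega>) (?\<psi> i \<omega>))"
    for \<omega>
    unfolding power2_norm_eq_inner
    by (simp add: mean_gradient_def inner_sum_left inner_sum_right power2_eq_square
        sum_divide_distrib sum_distrib_left)
  have int: "integrable M (\<lambda>\<omega>. inner (?\<psi> i \<omega>) (?\<psi> j \<omega>))" for i j
    by (rule in_L2_inner_integrable[OF sample_gradient_sample_in_L2[OF lam] sample_gradient_sample_in_L2[OF lam]])
  show "integrable M (\<lambda>\<omega>. (norm (mean_gradient lam n \<omega>))\<^sup>2)"
    unfolding sq using int by simp
  have diag: "(\<integral>\<omega>. inner (?\<psi> j \<omega>) (?\<psi> i \<omega>) \<partial>M)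
      = (if i = j then \<integral>\<omega>. (norm (sample_gradient lam (X \<omega>, Y \<omega>)))\<^sup>2 \<partial>M else 0)" for i j
    using inner_sample_gradients_integral_0[OF _ lam, of j i]
      integral_sample_eq(1)[of "\<lambda>z. (norm (sample_gradient lam z))\<^sup>2" i]
    by (cases "i = j") (simp_all add: power2_norm_eq_inner)
  have "(\<integral>\<omega>. (norm (mean_gradient lam n \<omega>))\<^sup>2 \<partial>M)
      = (1 / real n)\<^sup>2 * (real n * (\<integral>\<omega>. (norm (sample_gradient lam (X \<omega>, Y \<omega>)))\<^sup>2 \<partial>M))"
    unfolding sq using int by (simp add: diag)
  also have "\<dots> = (\<integral>\<omega>. (norm (sample_gradient lam (X \<omega>, Y \<omega>)))\<^sup>2 \<partial>M) / real n"
    using n by (simp add: power2_eq_square)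
  also have "\<dots> \<le> 2 * (\<kappa>\<^sup>2 + lam) * (\<integral>\<omega>. (norm (Y \<omega>))\<^sup>2 \<partial>M) / real n"
    using sample_gradient_in_L2(2)[OF lam] by (simp add: divide_right_mono)
  finally show "(\<integral>\<omega>. (norm (mean_gradient lam n \<omega>))\<^sup>2 \<partial>M)
      \<le> 2 * (\<kappa>\<^sup>2 + lam) * (\<integral>\<omega>. (norm (Y \<omega>))\<^sup>2 \<partial>M) / real n" .
qed

context
  fixes lam :: real and n :: nat and F :: "'a \<Rightarrow> 'h"
  assumes lam: "0 < lam" and n: "1 \<le> n"
    and F_min: "\<And>\<omega> g. \<omega> \<in> space M \<Longrightarrow>
      reg_emp_risk emb (\<lambda>i. Xs i \<omega>) (\<lambda>i. Ys i \<omega>) n lam (F \<omega>)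
        \<le> reg_emp_risk emb (\<lambda>i. Xs i \<omega>) (\<lambda>i. Ys i \<omega>) n lam g"
begin

lemma emp_minimizer_measurable: "F \<in> borel_measurable M"
proof (rule borel_measurable_argmin[OF _ lam])
  show "(\<lambda>\<omega>. reg_emp_risk emb (\<lambda>i. Xs i \<omega>) (\<lambda>i. Ys i \<omega>) n lam h) \<in> borel_measurable M" for h
    unfolding reg_emp_risk_def by measurable
  show "reg_emp_risk emb (\<lambda>i. Xs i \<omega>) (\<lambda>i. Ys i \<omega>) n lam (F \<omega>) + lam * (dist h (F \<omega>))\<^sup>2
      \<le> reg_emp_risk emb (\<lambda>i. Xs i \<omega>) (\<lambda>i. Ys i \<omega>) n lam h" if "\<omega> \<in> space M" for \<omega> h
    using reg_emp_risk_at_minimizer[OF lam F_min[OF that], of h] emp_form_lower[of lam "h - F \<omega>"] lam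
    by (simp add: dist_norm)
  show "isCont (reg_emp_risk emb (\<lambda>i. Xs i \<omega>) (\<lambda>i. Ys i \<omega>) n lam) (F \<omega>)" for \<omega>
    using continuous_on_reg_emp_risk by (simp add: continuous_on_eq_continuous_at)
qed

lemma excess_risk_emp_minimizer_le:
  assumes "\<omega> \<in> space M"
  shows "excess_risk (F \<omega>)
           \<le> 2 * \<kappa>\<^sup>2 * (norm (mean_gradient lam n \<omega>))\<^sup>2 / lam\<^sup>2 + 2 * excess_risk (reg_minimizer lam)"
proof -
  have "norm (F \<omega> - reg_minimizer lam) \<le> norm (mean_gradient lam n \<omega>) / lam"
    unfolding mean_gradient_def
    by (rule emp_minimizer_near_reg_minimizer[OF lam F_min[OF assms] n])
  then have "(norm (F \<omega> - reg_minimizer lam))\<^sup>2 \<le> (norm (mean_gradient lam n \<omega>) / lam)\<^sup>2"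
    by (rule power_mono) simp
  then have "(norm (F \<omega> - reg_minimizer lam))\<^sup>2 \<le> (norm (mean_gradient lam n \<omega>))\<^sup>2 / lam\<^sup>2"
    by (simp add: power_divide)
  then show ?thesis
    using excess_risk_le_dist[of "F \<omega>" "reg_minimizer lam"]
    by (smt (verit) mult_left_mono zero_le_power2 times_divide_eq_right)
qed

lemma excess_risk_emp_minimizer_tail_bound:
  assumes e: "0 < e" and approx: "2 * excess_risk (reg_minimizer lam) \<le> e / 2"
  shows "measure M {\<omega> \<in> space M. e < excess_risk (F \<omega>)}
           \<le> 8 * \<kappa>\<^sup>2 * (\<kappa>\<^sup>2 + lam) * (\<integral>\<omega>. (norm (Y \<omega>))\<^sup>2 \<partial>M) / (e * (real n * lam\<^sup>2))"
proof -
  let ?u = "\<lambda>\<omega>. 2 * \<kappa>\<^sup>2 * (norm (mean_gradient lam n \<omega>))\<^sup>2 / lam\<^sup>2"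
  have "{\<omega> \<in> space M. e < excess_risk (F \<omega>)} \<subseteq> {\<omega> \<in> space M. e / 2 \<le> ?u \<omega>}"
    using excess_risk_emp_minimizer_le approx by fastforce
  then have "measure M {\<omega> \<in> space M. e < excess_risk (F \<omega>)} \<le> measure M {\<omega> \<in> space M. e / 2 \<le> ?u \<omega>}"
    by (intro finite_measure_mono) measurable
  also have "\<dots> \<le> (\<integral>\<omega>. ?u \<omega> \<partial>M) / (e / 2)"
    using mean_gradient_variance(1)[OF lam n] e
    by (intro integral_Markov_inequality_measure[where A = "space M"]) auto
  also have "\<dots> = 4 * \<kappa>\<^sup>2 * (\<integral>\<omega>. (norm (mean_gradient lam n \<omega>))\<^sup>2 \<partial>M) / (e * lam\<^sup>2)"
    by (simp add: field_simps)
  also have "\<dots> \<le> 4 * \<kappa>\<^sup>2 * (2 * (\<kappa>\<^sup>2 + lam) * (\<integral>\<omega>. (norm (Y \<omega>))\<^sup>2 \<partial>M) / real n) / (e * lam\<^sup>2)"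
    using mean_gradient_variance(2)[OF lam n] e lam
    by (intro divide_right_mono mult_left_mono) auto
  also have "\<dots> = 8 * \<kappa>\<^sup>2 * (\<kappa>\<^sup>2 + lam) * (\<integral>\<omega>. (norm (Y \<omega>))\<^sup>2 \<partial>M) / (e * (real n * lam\<^sup>2))"
    by (simp add: field_simps)
  finally show ?thesis .
qed

end

lemma excess_risk_emp_minimizer_tendsto_0:
  assumes approx: "\<And>e. 0 < e \<Longrightarrow> \<exists>h. excess_risk h < e"
    and lam_pos: "\<And>n. 0 < lam n" and lam_lim: "lam \<longlonglongrightarrow> 0"
    and lam_rate: "filterlim (\<lambda>n. sqrt (real n) * lam n) at_top sequentially"
    and F_min: "\<And>n \<omega> g. 1 \<le> n \<Longrightarrow> \<omega> \<in> space M \<Longrightarrow>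
      reg_emp_risk emb (\<lambda>i. Xs i \<omega>) (\<lambda>i. Ys i \<omega>) n (lam n) (F n \<omega>)
        \<le> reg_emp_risk emb (\<lambda>i. Xs i \<omega>) (\<lambda>i. Ys i \<omega>) n (lam n) g"
    and e: "0 < e"
  shows "(\<lambda>n. measure M {\<omega> \<in> space M. e < excess_risk (F n \<omega>)}) \<longlonglongrightarrow> 0"
proof -
  define C where "C = 8 * \<kappa>\<^sup>2 * (\<integral>\<omega>. (norm (Y \<omega>))\<^sup>2 \<partial>M) / e"
  have "filterlim (\<lambda>n. (sqrt (real n) * lam n) * (sqrt (real n) * lam n)) at_top sequentially"
    by (rule filterlim_at_top_mult_at_top[OF lam_rate lam_rate])
  then have "filterlim (\<lambda>n. real n * (lam n)\<^sup>2) at_top sequentially"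
    by (simp add: power2_eq_square algebra_simps)
  then have "(\<lambda>n. C * (\<kappa>\<^sup>2 + lam n) * inverse (real n * (lam n)\<^sup>2)) \<longlonglongrightarrow> C * (\<kappa>\<^sup>2 + 0) * 0"
    by (intro tendsto_intros lam_lim tendsto_inverse_0_at_top)
  then have bound_lim: "(\<lambda>n. C * (\<kappa>\<^sup>2 + lam n) / (real n * (lam n)\<^sup>2)) \<longlonglongrightarrow> 0"
    by (simp add: divide_inverse)
  have "\<forall>\<^sub>F n in sequentially. excess_risk (reg_minimizer (lam n)) < e / 4"
    using order_tendstoD(2)[OF excess_risk_reg_minimizer_tendsto_0[OF approx lam_pos lam_lim], of "e / 4"] e
    by simp
  then have tail: "\<forall>\<^sub>F n in sequentially. measure M {\<omega> \<in> space M. e < excess_risk (F n \<omega>)}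
      \<le> C * (\<kappa>\<^sup>2 + lam n) / (real n * (lam n)\<^sup>2)"
    using eventually_ge_at_top[of 1]
  proof eventually_elim
    case (elim n)
    then show ?case
      using excess_risk_emp_minimizer_tail_bound[OF lam_pos elim(2) F_min[OF elim(2)] e]
      by (simp add: C_def field_simps)
  qed
  show ?thesis
    by (rule tendsto_sandwich[OF _ tail tendsto_const bound_lim]) simp
qed

end

theorem theorem3p3:
  fixes M :: "'a measure" and MX :: "'x measure"
    and X :: "'a \<Rightarrow> 'x" and Y :: "'a \<Rightarrow> 'y::{real_inner,complete_space,second_countable_topology}"
    and fstar :: "'x \<Rightarrow> 'y"
    and emb :: "'h::{real_inner,complete_space,second_countable_topology} \<Rightarrow> 'x \<Rightarrow> 'y"
    and B :: real
    and Xs :: "nat \<Rightarrow> 'a \<Rightarrow> 'x" and Ys :: "nat \<Rightarrow> 'a \<Rightarrow> 'y"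
    and lam :: "nat \<Rightarrow> real"
    and fhat :: "nat \<Rightarrow> 'a \<Rightarrow> 'h"
  assumes P: "prob_space M"
    and sepX: "separable_measurable_space MX"
    and X_meas: "X \<in> measurable M MX"
    and Y_meas: "Y \<in> borel_measurable M"
    and Y_L2: "integrable M (\<lambda>\<omega>. (norm (Y \<omega>))\<^sup>2)"
    and cond_exp: "is_cond_exp_given M MX X Y fstar"
    and H: "vv_rkhs emb"
    and H_meas: "\<And>h. emb h \<in> borel_measurable MX"
    and B_pos: "B > 0"
    and K_bdd: "bdd_above (range (\<lambda>x. onorm (rk_kernel emb x x)))"
    and K_sup: "(SUP x. onorm (rk_kernel emb x x)) < B"
    and dense: "\<And>g e. in_L2 (distr M MX X) g \<Longrightarrow> e > 0 \<Longrightarrow>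
                  \<exists>h. L2_sq_norm (distr M MX X) (\<lambda>x. emb h x - g x) < e"
    and Xs_meas: "\<And>i. Xs i \<in> measurable M MX"
    and Ys_meas: "\<And>i. Ys i \<in> borel_measurable M"
    and iid_indep: "prob_space.indep_vars M (\<lambda>_. MX \<Otimes>\<^sub>M borel) (\<lambda>i \<omega>. (Xs i \<omega>, Ys i \<omega>)) UNIV"
    and iid_distr: "\<And>i. distr M (MX \<Otimes>\<^sub>M borel) (\<lambda>\<omega>. (Xs i \<omega>, Ys i \<omega>))
                        = distr M (MX \<Otimes>\<^sub>M borel) (\<lambda>\<omega>. (X \<omega>, Y \<omega>))"
    and lam_pos: "\<And>n. lam n > 0"
    and lam_lim: "lam \<longlonglongrightarrow> 0"
    and lam_rate: "filterlim (\<lambda>n. sqrt (real n) * lam n) at_top sequentially"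
    and fhat_min: "\<And>n \<omega> g. n \<ge> 1 \<Longrightarrow> \<omega> \<in> space M \<Longrightarrow>
         reg_emp_risk emb (\<lambda>i. Xs i \<omega>) (\<lambda>i. Ys i \<omega>) n (lam n) (fhat n \<omega>)
           \<le> reg_emp_risk emb (\<lambda>i. Xs i \<omega>) (\<lambda>i. Ys i \<omega>) n (lam n) g"
  shows "(\<forall>n \<omega>. \<omega> \<in> space M \<longrightarrow>
            risk M X Y (emb (fhat n \<omega>)) - risk M X Y fstar
              = (\<integral>\<omega>'. (norm (emb (fhat n \<omega>) (X \<omega>') - fstar (X \<omega>')))\<^sup>2 \<partial>M)
          \<and> (\<integral>\<omega>'. (norm (emb (fhat n \<omega>) (X \<omega>') - fstar (X \<omega>')))\<^sup>2 \<partial>M)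
              = L2_sq_norm (distr M MX X) (\<lambda>x. emb (fhat n \<omega>) x - fstar x))
       \<and> (\<forall>n\<ge>1. (\<lambda>\<omega>. L2_sq_norm (distr M MX X) (\<lambda>x. emb (fhat n \<omega>) x - fstar x)) \<in> borel_measurable M)
       \<and> (\<forall>e>0. (\<lambda>n. measure M {\<omega> \<in> space M.
              \<bar>L2_sq_norm (distr M MX X) (\<lambda>x. emb (fhat n \<omega>) x - fstar x)\<bar> > e}) \<longlonglongrightarrow> 0)"
proof -
  have eval_bl: "\<And>x. bounded_linear (\<lambda>h. emb h x)" using H by (simp add: vv_rkhs_def)
  have "norm (emb h x) \<le> sqrt B * norm h" for h x
    using cSUP_upper[OF UNIV_I K_bdd, of x] K_sup
    by (intro norm_eval_le_sqrt_kernel_bound[OF eval_bl]) simp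
  then interpret iid_sample M MX X Y fstar emb "sqrt B" Xs Ys
    using P X_meas Y_meas Y_L2 cond_exp eval_bl H_meas B_pos Xs_meas Ys_meas iid_indep iid_distr
    by (intro iid_sample.intro rkhs_model.intro cond_exp_model.intro iid_sample_axioms.intro
        rkhs_model_axioms.intro cond_exp_model_axioms.intro) auto
  have L2_eq: "L2_sq_norm (distr M MX X) (\<lambda>x. emb h x - fstar x) = excess_risk h" for h
    unfolding excess_risk_def by (rule L2_sq_norm_distr) simp_all
  have approx: "\<exists>h. excess_risk h < e" if "0 < e" for e
    using dense[OF fstar_in_L2_distr that] by (simp add: L2_eq)
  show ?thesis
    unfolding L2_eq
    using risk_emb_decomposition excess_risk_nonneg
      measurable_compose[OF emp_minimizer_measurable[OF lam_pos _ fhat_min]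
        borel_measurable_continuous_onI[OF continuous_on_excess_risk]]
      excess_risk_emp_minimizer_tendsto_0[OF approx lam_pos lam_lim lam_rate fhat_min]
    by (auto simp: excess_risk_def)
qed

end
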